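(* Let $\mathbb C$ be a homological category with finite colimits, and let $x\colon X\to A$, $y\colon Y\to A$ be morphisms whose images are normal monomorphisms. Then the following are equivalent: (a) the span $A/X\leftarrow A\to A/Y$ admits an internal pregroupoid structure; (b) the span $A/X\leftarrow A\to A/Y$ admits a unique internal pregroupoid structure; (c) $[(X,x),(Y,y)]_1=0$.
   Context: A homological category is a regular pointed category in which the Split Short Five Lemma holds; images are taken in the (regular epi, mono) factorization; a normal monomorphism is a kernel of some morphism. Notation: $\iota_i$ coproduct injections, $[a,b,c]$ copairing, $\langle\cdot\rangle$ pairing. $A_3=A\times_{A/X}A\times_{A/Y}A$ is the limit of $A\xrightarrow{\mathsf{coker}(x)}A/X\xleftarrow{\mathsf{coker}(x)}A\xrightarrow{\mathsf{coker}(y)}A/Y\xleftarrow{\mathsf{coker}(y)}A$. An internal pregroupoid structure on the span $A/X\leftarrow A\to A/Y$ is a morphism $p\colon A_3\to A$ with $p\langle\pi_1,\pi_2,\pi_2\rangle=\pi_1$ on $A\times_{A/X}A$ and $p\langle\pi_1,\pi_1,\pi_2\rangle=\pi_2$ on $A\times_{A/Y}A$ ($\pi_1,\pi_2$ the kernel-pair projections). $[(X,x),(Y,y)]_1$ denotes the $1$-weighted subobject commutator: the image under $[1_A,x,y]\colon A+X+Y\to A$ of the kernel of $\langle [\iota_1,\iota_2,0],[\iota_1,0,\iota_2]\rangle\colon A+X+Y\to (A+X)\times_A(A+Y)$, where $(A+X)\times_A(A+Y)$ is the pullback of $[1,0]\colon A+X\to A$ and $[1,0]\colon A+Y\to A$;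 "$=0$" means it is the zero subobject. *)

theory Defs
  imports Main
begin

record ('o,'a) cat =
  Obj :: "'o set"
  Arr :: "'a set"
  Dom :: "'a \<Rightarrow> 'o"
  Cod :: "'a \<Rightarrow> 'o"
  Id :: "'o \<Rightarrow> 'a"
  Comp :: "'a \<Rightarrow> 'a \<Rightarrow> 'a"   (* Comp C g f  =  g o f *)

definition hom :: "('o,'a) cat \<Rightarrow> 'o \<Rightarrow> 'o \<Rightarrow> 'a set" where
  "hom C X Y = {f \<in> Arr C. Dom C f = X \<and> Cod C f = Y}"

definition category :: "('o,'a) cat \<Rightarrow> bool" where
  "category C \<longleftrightarrow>
     (\<forall>f\<in>Arr C. Dom C f \<in> Obj C \<and> Cod C f \<in> Obj C) \<and>
     (\<forall>X\<in>Obj C. Id C X \<in> hom C X X) \<and>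
     (\<forall>f g. f \<in> Arr C \<and> g \<in> Arr C \<and> Cod C f = Dom C g \<longrightarrow>
        Comp C g f \<in> hom C (Dom C f) (Cod C g)) \<and>
     (\<forall>f\<in>Arr C. Comp C f (Id C (Dom C f)) = f \<and> Comp C (Id C (Cod C f)) f = f) \<and>
     (\<forall>f g h. f \<in> Arr C \<and> g \<in> Arr C \<and> h \<in> Arr C \<and> Cod C f = Dom C g \<and> Cod C g = Dom C h
        \<longrightarrow> Comp C h (Comp C g f) = Comp C (Comp C h g) f)"

definition mono :: "('o,'a) cat \<Rightarrow> 'a \<Rightarrow> bool" where
  "mono C m \<longleftrightarrow> m \<in> Arr C \<and>
     (\<forall>f g. f \<in> Arr C \<and> g \<in> Arr C \<and> Cod C f = Dom C m \<and> Cod C g = Dom C m \<and>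
        Dom C f = Dom C g \<and> Comp C m f = Comp C m g \<longrightarrow> f = g)"

definition iso :: "('o,'a) cat \<Rightarrow> 'a \<Rightarrow> bool" where
  "iso C f \<longleftrightarrow> f \<in> Arr C \<and>
     (\<exists>g\<in>hom C (Cod C f) (Dom C f). Comp C g f = Id C (Dom C f) \<and> Comp C f g = Id C (Cod C f))"

definition initial :: "('o,'a) cat \<Rightarrow> 'o \<Rightarrow> bool" where
  "initial C I \<longleftrightarrow> I \<in> Obj C \<and> (\<forall>Y\<in>Obj C. \<exists>!f. f \<in> hom C I Y)"

definition terminal :: "('o,'a) cat \<Rightarrow> 'o \<Rightarrow> bool" where
  "terminal C T \<longleftrightarrow> T \<in> Obj C \<and> (\<forall>Y\<in>Obj C. \<exists>!f. f \<in> hom C Y T)"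

definition zero_obj :: "('o,'a) cat \<Rightarrow> 'o \<Rightarrow> bool" where
  "zero_obj C Z \<longleftrightarrow> initial C Z \<and> terminal C Z"

definition pointed :: "('o,'a) cat \<Rightarrow> bool" where
  "pointed C \<longleftrightarrow> (\<exists>Z. zero_obj C Z)"

definition zero_mor :: "('o,'a) cat \<Rightarrow> 'a \<Rightarrow> bool" where
  "zero_mor C f \<longleftrightarrow> f \<in> Arr C \<and>
     (\<exists>Z u v. zero_obj C Z \<and> u \<in> hom C (Dom C f) Z \<and> v \<in> hom C Z (Cod C f) \<and> f = Comp C v u)"

definition is_pullback :: "('o,'a) cat \<Rightarrow> 'a \<Rightarrow> 'a \<Rightarrow> 'o \<Rightarrow> 'a \<Rightarrow> 'a \<Rightarrow> bool" where
  "is_pullback C f g P p q \<longleftrightarrow>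
     f \<in> Arr C \<and> g \<in> Arr C \<and> Cod C f = Cod C g \<and>
     p \<in> hom C P (Dom C f) \<and> q \<in> hom C P (Dom C g) \<and> Comp C f p = Comp C g q \<and>
     (\<forall>W u v. u \<in> hom C W (Dom C f) \<and> v \<in> hom C W (Dom C g) \<and> Comp C f u = Comp C g v \<longrightarrow>
        (\<exists>!h. h \<in> hom C W P \<and> Comp C p h = u \<and> Comp C q h = v))"

definition is_pushout :: "('o,'a) cat \<Rightarrow> 'a \<Rightarrow> 'a \<Rightarrow> 'o \<Rightarrow> 'a \<Rightarrow> 'a \<Rightarrow> bool" where
  "is_pushout C f g P p q \<longleftrightarrow>
     f \<in> Arr C \<and> g \<in> Arr C \<and> Dom C f = Dom C g \<and>
     p \<in> hom C (Cod C f) P \<and> q \<in> hom C (Cod C g) P \<and> Comp C p f = Comp C q g \<and>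
     (\<forall>W u v. u \<in> hom C (Cod C f) W \<and> v \<in> hom C (Cod C g) W \<and> Comp C u f = Comp C v g \<longrightarrow>
        (\<exists>!h. h \<in> hom C P W \<and> Comp C h p = u \<and> Comp C h q = v))"

definition finitely_complete :: "('o,'a) cat \<Rightarrow> bool" where
  "finitely_complete C \<longleftrightarrow> (\<exists>T. terminal C T) \<and>
     (\<forall>f g. f \<in> Arr C \<and> g \<in> Arr C \<and> Cod C f = Cod C g \<longrightarrow> (\<exists>P p q. is_pullback C f g P p q))"

definition finitely_cocomplete :: "('o,'a) cat \<Rightarrow> bool" where
  "finitely_cocomplete C \<longleftrightarrow> (\<exists>I. initial C I) \<and>
     (\<forall>f g. f \<in> Arr C \<and> g \<in> Arr C \<and> Dom C f = Dom C g \<longrightarrow> (\<exists>P p q. is_pushout C f g P p q))"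

definition is_coequalizer :: "('o,'a) cat \<Rightarrow> 'a \<Rightarrow> 'a \<Rightarrow> 'a \<Rightarrow> bool" where
  "is_coequalizer C f g e \<longleftrightarrow>
     f \<in> Arr C \<and> g \<in> Arr C \<and> Dom C f = Dom C g \<and> Cod C f = Cod C g \<and>
     e \<in> Arr C \<and> Dom C e = Cod C f \<and> Comp C e f = Comp C e g \<and>
     (\<forall>u. u \<in> Arr C \<and> Dom C u = Cod C f \<and> Comp C u f = Comp C u g \<longrightarrow>
        (\<exists>!h. h \<in> hom C (Cod C e) (Cod C u) \<and> Comp C h e = u))"

definition regular_epi :: "('o,'a) cat \<Rightarrow> 'a \<Rightarrow> bool" where
  "regular_epi C e \<longleftrightarrow> (\<exists>f g. is_coequalizer C f g e)"

definition regular_category :: "('o,'a) cat \<Rightarrow> bool" where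
  "regular_category C \<longleftrightarrow> category C \<and> finitely_complete C \<and>
     (\<forall>f P p q. is_pullback C f f P p q \<longrightarrow> (\<exists>e. is_coequalizer C p q e)) \<and>
     (\<forall>e g P p q. regular_epi C e \<and> is_pullback C e g P p q \<longrightarrow> regular_epi C q)"

definition is_kernel :: "('o,'a) cat \<Rightarrow> 'a \<Rightarrow> 'a \<Rightarrow> bool" where
  "is_kernel C k f \<longleftrightarrow> f \<in> Arr C \<and> k \<in> Arr C \<and> Cod C k = Dom C f \<and> zero_mor C (Comp C f k) \<and>
     (\<forall>u. u \<in> Arr C \<and> Cod C u = Dom C f \<and> zero_mor C (Comp C f u) \<longrightarrow>
        (\<exists>!h. h \<in> hom C (Dom C u) (Dom C k) \<and> Comp C k h = u))"

definition is_cokernel :: "('o,'a) cat \<Rightarrow> 'a \<Rightarrow> 'a \<Rightarrow> bool" where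
  "is_cokernel C q f \<longleftrightarrow> f \<in> Arr C \<and> q \<in> Arr C \<and> Dom C q = Cod C f \<and> zero_mor C (Comp C q f) \<and>
     (\<forall>u. u \<in> Arr C \<and> Dom C u = Cod C f \<and> zero_mor C (Comp C u f) \<longrightarrow>
        (\<exists>!h. h \<in> hom C (Cod C q) (Cod C u) \<and> Comp C h q = u))"

definition normal_mono :: "('o,'a) cat \<Rightarrow> 'a \<Rightarrow> bool" where
  "normal_mono C m \<longleftrightarrow> (\<exists>f. is_kernel C m f)"

definition split_short_five :: "('o,'a) cat \<Rightarrow> bool" where
  "split_short_five C \<longleftrightarrow>
     (\<forall>p s k p' s' k' f u v.
        is_kernel C k p \<and> s \<in> hom C (Cod C p) (Dom C p) \<and> Comp C p s = Id C (Cod C p) \<and>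
        is_kernel C k' p' \<and> s' \<in> hom C (Cod C p') (Dom C p') \<and> Comp C p' s' = Id C (Cod C p') \<and>
        f \<in> hom C (Dom C p) (Dom C p') \<and> u \<in> hom C (Dom C k) (Dom C k') \<and>
        v \<in> hom C (Cod C p) (Cod C p') \<and>
        Comp C k' u = Comp C f k \<and> Comp C p' f = Comp C v p \<and> Comp C f s = Comp C s' v \<and>
        iso C u \<and> iso C v \<longrightarrow> iso C f)"

definition homological :: "('o,'a) cat \<Rightarrow> bool" where
  "homological C \<longleftrightarrow> regular_category C \<and> pointed C \<and> split_short_five C"

text \<open>(regular epi, mono) factorisation: f = m o e; m is (a representative of) the image of f.\<close>
definition image_fact :: "('o,'a) cat \<Rightarrow> 'a \<Rightarrow> 'a \<Rightarrow> 'a \<Rightarrow> bool" where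
  "image_fact C f e m \<longleftrightarrow> f \<in> Arr C \<and> regular_epi C e \<and> mono C m \<and>
     Dom C e = Dom C f \<and> Cod C e = Dom C m \<and> Cod C m = Cod C f \<and> f = Comp C m e"

definition is_coproduct2 :: "('o,'a) cat \<Rightarrow> 'o \<Rightarrow> 'o \<Rightarrow> 'o \<Rightarrow> 'a \<Rightarrow> 'a \<Rightarrow> bool" where
  "is_coproduct2 C A B S i1 i2 \<longleftrightarrow> i1 \<in> hom C A S \<and> i2 \<in> hom C B S \<and>
     (\<forall>W f g. f \<in> hom C A W \<and> g \<in> hom C B W \<longrightarrow>
        (\<exists>!h. h \<in> hom C S W \<and> Comp C h i1 = f \<and> Comp C h i2 = g))"

definition is_coproduct3 :: "('o,'a) cat \<Rightarrow> 'o \<Rightarrow> 'o \<Rightarrow> 'o \<Rightarrow> 'o \<Rightarrow> 'a \<Rightarrow> 'a \<Rightarrow> 'a \<Rightarrow> bool" where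
  "is_coproduct3 C A B D S i1 i2 i3 \<longleftrightarrow> i1 \<in> hom C A S \<and> i2 \<in> hom C B S \<and> i3 \<in> hom C D S \<and>
     (\<forall>W f g k. f \<in> hom C A W \<and> g \<in> hom C B W \<and> k \<in> hom C D W \<longrightarrow>
        (\<exists>!h. h \<in> hom C S W \<and> Comp C h i1 = f \<and> Comp C h i2 = g \<and> Comp C h i3 = k))"

text \<open>Limit of the zigzag  A --qx--> Q <--qx-- A --qy--> R <--qy-- A  (the object A_3).\<close>
definition is_zigzag_limit :: "('o,'a) cat \<Rightarrow> 'a \<Rightarrow> 'a \<Rightarrow> 'o \<Rightarrow> 'a \<Rightarrow> 'a \<Rightarrow> 'a \<Rightarrow> bool" where
  "is_zigzag_limit C qx qy L l1 l2 l3 \<longleftrightarrow>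
     qx \<in> Arr C \<and> qy \<in> Arr C \<and> Dom C qx = Dom C qy \<and>
     l1 \<in> hom C L (Dom C qx) \<and> l2 \<in> hom C L (Dom C qx) \<and> l3 \<in> hom C L (Dom C qx) \<and>
     Comp C qx l1 = Comp C qx l2 \<and> Comp C qy l2 = Comp C qy l3 \<and>
     (\<forall>W u1 u2 u3. u1 \<in> hom C W (Dom C qx) \<and> u2 \<in> hom C W (Dom C qx) \<and> u3 \<in> hom C W (Dom C qx) \<and>
        Comp C qx u1 = Comp C qx u2 \<and> Comp C qy u2 = Comp C qy u3 \<longrightarrow>
        (\<exists>!h. h \<in> hom C W L \<and> Comp C l1 h = u1 \<and> Comp C l2 h = u2 \<and> Comp C l3 h = u3))"

end

theory Submission
  imports Defs
begin

text \<open>Let \<open>\<psi> : A + X + Y \<rightarrow> A\<^sub>3\<close> send \<open>A\<close> diagonally, \<open>X\<close> to \<open>(x,0,0)\<close> and \<open>Y\<close> to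
  \<open>(0,0,y)\<close>; it factors through the map \<open>g : A + X + Y \<rightarrow> (A + X) \<times>\<^sub>A (A + Y)\<close> whose kernel
  defines the commutator. A pregroupoid structure \<open>p\<close> satisfies \<open>p \<psi> = [1,x,y]\<close>, so \<open>[1,x,y]\<close>
  kills the kernel of \<open>g\<close> and the commutator vanishes. Conversely, if it vanishes then \<open>[1,x,y]\<close>
  factors through \<open>g\<close>, which is the cokernel of its kernel, and the factorisation kills the
  kernel of \<open>\<psi>\<close>; since \<open>\<psi>\<close> is also the cokernel of its kernel, \<open>[1,x,y]\<close> factors through \<open>\<psi>\<close>,
  and the factorisation is a pregroupoid structure.

  All of this rests on the split short five lemma in the form: in a split extension, the kernel
  and the section are jointly extremal-epimorphic. It shows that \<open>g\<close> and \<open>\<psi>\<close> have full image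
  (using that the images of \<open>x\<close> and \<open>y\<close> are the kernels of \<open>A \<rightarrow> A/X\<close> and \<open>A \<rightarrow> A/Y\<close>), and it
  gives uniqueness, as \<open>A\<^sub>3\<close> is a split extension of \<open>A \<times>\<^sub>A\<^sub>/\<^sub>Y A\<close> whose kernel lies in
  \<open>A \<times>\<^sub>A\<^sub>/\<^sub>X A\<close>.\<close>

locale homological_category =
  fixes C :: "('o,'a) cat"
  assumes homological: "homological C"
begin

abbreviation compose (infixr "\<cdot>" 55) where "g \<cdot> f \<equiv> Comp C g f"
abbreviation arr where "arr f \<equiv> f \<in> Arr C"

lemma category: "category C"
  using homological by (simp add: homological_def regular_category_def)

lemma arr_dom[simp]: "arr f \<Longrightarrow> Dom C f \<in> Obj C"
  and arr_cod[simp]: "arr f \<Longrightarrow> Cod C f \<in> Obj C"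
  using category by (simp_all add: category_def)

lemma comp_arr[simp]: "arr f \<Longrightarrow> arr g \<Longrightarrow> Cod C f = Dom C g \<Longrightarrow> arr (g \<cdot> f)"
  and dom_comp[simp]: "arr f \<Longrightarrow> arr g \<Longrightarrow> Cod C f = Dom C g \<Longrightarrow> Dom C (g \<cdot> f) = Dom C f"
  and cod_comp[simp]: "arr f \<Longrightarrow> arr g \<Longrightarrow> Cod C f = Dom C g \<Longrightarrow> Cod C (g \<cdot> f) = Cod C g"
  using category unfolding category_def hom_def by blast+

lemma comp_assoc:
  "arr f \<Longrightarrow> arr g \<Longrightarrow> arr h \<Longrightarrow> Cod C f = Dom C g \<Longrightarrow> Cod C g = Dom C h \<Longrightarrow>
   (h \<cdot> g) \<cdot> f = h \<cdot> (g \<cdot> f)"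
  using category unfolding category_def by metis

lemma id_arr[simp]: "X \<in> Obj C \<Longrightarrow> arr (Id C X)"
  and dom_id[simp]: "X \<in> Obj C \<Longrightarrow> Dom C (Id C X) = X"
  and cod_id[simp]: "X \<in> Obj C \<Longrightarrow> Cod C (Id C X) = X"
  using category unfolding category_def hom_def by blast+

lemma comp_id_left[simp]: "arr f \<Longrightarrow> Cod C f = X \<Longrightarrow> Id C X \<cdot> f = f"
  and comp_id_right[simp]: "arr f \<Longrightarrow> Dom C f = X \<Longrightarrow> f \<cdot> Id C X = f"
  using category unfolding category_def by blast+

lemma hom_iff: "f \<in> hom C X Y \<longleftrightarrow> arr f \<and> Dom C f = X \<and> Cod C f = Y"
  by (simp add: hom_def)

lemma homD: "f \<in> hom C X Y \<Longrightarrow> arr f \<and> Dom C f = X \<and> Cod C f = Y \<and> X \<in> Obj C \<and> Y \<in> Obj C"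
  by (metis arr_cod arr_dom hom_iff)

lemma comp_hom[intro]: "f \<in> hom C X Y \<Longrightarrow> g \<in> hom C Y Z \<Longrightarrow> g \<cdot> f \<in> hom C X Z"
  by (simp add: hom_iff)

lemma id_hom[intro]: "X \<in> Obj C \<Longrightarrow> Id C X \<in> hom C X X"
  by (simp add: hom_iff)

lemma comp_assoc_hom:
  "f \<in> hom C W X \<Longrightarrow> g \<in> hom C X Y \<Longrightarrow> h \<in> hom C Y Z \<Longrightarrow> (h \<cdot> g) \<cdot> f = h \<cdot> (g \<cdot> f)"
  by (simp add: hom_iff comp_assoc)

lemma comp_reassoc:
  "a \<cdot> b = c \<Longrightarrow> f \<in> hom C W X \<Longrightarrow> b \<in> hom C X Y \<Longrightarrow> a \<in> hom C Y Z \<Longrightarrow> a \<cdot> (b \<cdot> f) = c \<cdot> f"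
  using comp_assoc_hom by metis

lemma comp_reassoc_arr:
  "a \<cdot> b = c \<Longrightarrow> arr a \<Longrightarrow> arr b \<Longrightarrow> Cod C b = Dom C a \<Longrightarrow> arr z \<Longrightarrow> Cod C z = Dom C b \<Longrightarrow>
   a \<cdot> (b \<cdot> z) = c \<cdot> z"
  using comp_assoc by metis

lemma comp_id_left_hom: "f \<in> hom C X Y \<Longrightarrow> Id C Y \<cdot> f = f"
  and comp_id_right_hom: "f \<in> hom C X Y \<Longrightarrow> f \<cdot> Id C X = f"
  by (simp_all add: hom_iff)

lemma monoI:
  assumes "arr m"
    and "\<And>W a b. a \<in> hom C W (Dom C m) \<Longrightarrow> b \<in> hom C W (Dom C m) \<Longrightarrow> m \<cdot> a = m \<cdot> b \<Longrightarrow> a = b"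
  shows "mono C m"
  unfolding mono_def using assms by (metis hom_iff)

lemma monoD:
  "mono C m \<Longrightarrow> a \<in> hom C W (Dom C m) \<Longrightarrow> b \<in> hom C W (Dom C m) \<Longrightarrow> m \<cdot> a = m \<cdot> b \<Longrightarrow> a = b"
  unfolding mono_def by (metis homD)

lemma iso_id: "X \<in> Obj C \<Longrightarrow> iso C (Id C X)"
  unfolding iso_def by (auto simp: hom_iff)

lemma isoE:
  assumes "iso C f" "f \<in> hom C X Y"
  obtains g where "g \<in> hom C Y X" "g \<cdot> f = Id C X" "f \<cdot> g = Id C Y"
  using assms unfolding iso_def by (metis homD)


subsection \<open>Zero morphisms\<close>

lemma pointed: "pointed C"
  using homological by (simp add: homological_def)

lemma zero_obj_Obj: "zero_obj C Z \<Longrightarrow> Z \<in> Obj C"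
  unfolding zero_obj_def initial_def by blast

lemma initial_unique: "initial C I \<Longrightarrow> f \<in> hom C I Y \<Longrightarrow> g \<in> hom C I Y \<Longrightarrow> f = g"
  unfolding initial_def by (metis homD)

lemma terminal_unique: "terminal C T \<Longrightarrow> f \<in> hom C Y T \<Longrightarrow> g \<in> hom C Y T \<Longrightarrow> f = g"
  unfolding terminal_def by (metis homD)

lemma zero_mor_exists:
  assumes "X \<in> Obj C" "Y \<in> Obj C"
  shows "\<exists>f. f \<in> hom C X Y \<and> zero_mor C f"
proof -
  obtain Z where Z: "zero_obj C Z" using pointed unfolding pointed_def by blast
  obtain u where u: "u \<in> hom C X Z"
    using Z assms unfolding zero_obj_def terminal_def by blast
  obtain v where v: "v \<in> hom C Z Y"
    using Z assms unfolding zero_obj_def initial_def by blast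
  have "v \<cdot> u \<in> hom C X Y" using u v by blast
  moreover have "zero_mor C (v \<cdot> u)"
    unfolding zero_mor_def using u v Z calculation by (auto simp: hom_iff)
  ultimately show ?thesis by blast
qed

definition zero_arr :: "'o \<Rightarrow> 'o \<Rightarrow> 'a" where
  "zero_arr X Y = (SOME f. f \<in> hom C X Y \<and> zero_mor C f)"

lemma zero_arr_hom[intro]: "X \<in> Obj C \<Longrightarrow> Y \<in> Obj C \<Longrightarrow> zero_arr X Y \<in> hom C X Y"
  and zero_mor_zero_arr: "X \<in> Obj C \<Longrightarrow> Y \<in> Obj C \<Longrightarrow> zero_mor C (zero_arr X Y)"
  using someI_ex[OF zero_mor_exists] unfolding zero_arr_def by blast+

lemma zero_mor_unique:
  assumes "zero_mor C f" "zero_mor C f'" "Dom C f = Dom C f'" "Cod C f = Cod C f'"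
  shows "f = f'"
proof -
  obtain Z u v where Z: "zero_obj C Z" "u \<in> hom C (Dom C f) Z" "v \<in> hom C Z (Cod C f)" "f = v \<cdot> u"
    using assms(1) unfolding zero_mor_def by auto
  obtain Z' u' v' where Z': "zero_obj C Z'" "u' \<in> hom C (Dom C f) Z'" "v' \<in> hom C Z' (Cod C f)"
    "f' = v' \<cdot> u'"
    using assms(2-4) unfolding zero_mor_def by auto
  obtain w where w: "w \<in> hom C Z Z'"
    using Z(1) zero_obj_Obj[OF Z'(1)] unfolding zero_obj_def initial_def by (meson ex1_implies_ex)
  have "v' \<cdot> w = v"
    using Z(1,3) Z'(3) w unfolding zero_obj_def by (blast intro: initial_unique)
  moreover have "w \<cdot> u = u'"
    using Z(2) Z'(1,2) w unfolding zero_obj_def by (blast intro: terminal_unique)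
  ultimately show ?thesis
    using Z(2-4) Z'(3,4) w comp_assoc_hom by metis
qed

lemma zero_mor_iff: "zero_mor C f \<longleftrightarrow> arr f \<and> f = zero_arr (Dom C f) (Cod C f)"
  by (metis arr_cod arr_dom homD zero_arr_hom zero_mor_def zero_mor_unique zero_mor_zero_arr)

lemma zero_arr_arr[simp]: "X \<in> Obj C \<Longrightarrow> Y \<in> Obj C \<Longrightarrow> arr (zero_arr X Y)"
  and dom_zero_arr[simp]: "X \<in> Obj C \<Longrightarrow> Y \<in> Obj C \<Longrightarrow> Dom C (zero_arr X Y) = X"
  and cod_zero_arr[simp]: "X \<in> Obj C \<Longrightarrow> Y \<in> Obj C \<Longrightarrow> Cod C (zero_arr X Y) = Y"
  using zero_arr_hom by (simp_all add: hom_iff)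

lemma zero_morI: "f \<in> hom C X Y \<Longrightarrow> f = zero_arr X Y \<Longrightarrow> zero_mor C f"
  and zero_morD: "zero_mor C f \<Longrightarrow> f \<in> hom C X Y \<Longrightarrow> f = zero_arr X Y"
  by (simp_all add: hom_iff zero_mor_iff)

lemma comp_zero_arr_right[simp]:
  assumes "arr g" "Dom C g = Y" "X \<in> Obj C"
  shows "g \<cdot> zero_arr X Y = zero_arr X (Cod C g)"
proof -
  obtain Z u v where "zero_obj C Z" "u \<in> hom C X Z" "v \<in> hom C Z Y" "zero_arr X Y = v \<cdot> u"
    using zero_mor_zero_arr[of X Y] assms unfolding zero_mor_def by auto
  then have "zero_mor C (g \<cdot> zero_arr X Y)"
    unfolding zero_mor_def using assms
    by (intro conjI exI[of _ Z] exI[of _ u] exI[of _ "g \<cdot> v"]) (auto simp: hom_iff comp_assoc)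
  then show ?thesis using assms arr_dom[of g] by (simp add: zero_mor_iff)
qed

lemma comp_zero_arr_left[simp]:
  assumes "arr f" "Cod C f = Y" "W \<in> Obj C"
  shows "zero_arr Y W \<cdot> f = zero_arr (Dom C f) W"
proof -
  obtain Z u v where "zero_obj C Z" "u \<in> hom C Y Z" "v \<in> hom C Z W" "zero_arr Y W = v \<cdot> u"
    using zero_mor_zero_arr[of Y W] assms unfolding zero_mor_def by auto
  then have "zero_mor C (zero_arr Y W \<cdot> f)"
    unfolding zero_mor_def using assms
    by (intro conjI exI[of _ Z] exI[of _ "u \<cdot> f"] exI[of _ v]) (auto simp: hom_iff comp_assoc)
  then show ?thesis using assms arr_cod[of f] by (simp add: zero_mor_iff)
qed

lemma comp_zero_arr_right_hom: "g \<in> hom C Y W \<Longrightarrow> X \<in> Obj C \<Longrightarrow> g \<cdot> zero_arr X Y = zero_arr X W"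
  and comp_zero_arr_left_hom: "f \<in> hom C X Y \<Longrightarrow> W \<in> Obj C \<Longrightarrow> zero_arr Y W \<cdot> f = zero_arr X W"
  by (simp_all add: hom_iff)

lemma hom_to_zero_obj: "zero_obj C Z \<Longrightarrow> a \<in> hom C W Z \<Longrightarrow> a = zero_arr W Z"
  and hom_from_zero_obj: "zero_obj C Z \<Longrightarrow> a \<in> hom C Z W \<Longrightarrow> a = zero_arr Z W"
  by (metis homD zero_arr_hom zero_obj_def initial_unique terminal_unique)+

lemma zero_objI:
  assumes "M \<in> Obj C" "Id C M = zero_arr M M"
  shows "zero_obj C M"
  unfolding zero_obj_def initial_def terminal_def
proof (intro conjI ballI assms(1))
  fix Z assume Z: "Z \<in> Obj C"
  show "\<exists>!f. f \<in> hom C M Z"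
    using Z assms comp_id_right_hom comp_zero_arr_right_hom by (metis zero_arr_hom)
  show "\<exists>!f. f \<in> hom C Z M"
    using Z assms comp_id_left_hom comp_zero_arr_left_hom by (metis zero_arr_hom)
qed

subsection \<open>Universal properties\<close>

lemma pullback_homs:
  assumes "is_pullback C f g P p q" "f \<in> hom C X Z" "g \<in> hom C Y Z"
  shows "p \<in> hom C P X" "q \<in> hom C P Y" "f \<cdot> p = g \<cdot> q"
  using assms unfolding is_pullback_def by (auto simp: hom_iff)

lemma pullback_lift:
  assumes "is_pullback C f g P p q" "f \<in> hom C X Z" "g \<in> hom C Y Z"
    and "u \<in> hom C W X" "v \<in> hom C W Y" "f \<cdot> u = g \<cdot> v"
  obtains t where "t \<in> hom C W P" "p \<cdot> t = u" "q \<cdot> t = v"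
proof -
  have "Dom C f = X" "Dom C g = Y" using assms(2,3) by (simp_all add: hom_iff)
  then show ?thesis using assms that unfolding is_pullback_def by blast
qed

lemma pullback_eq:
  assumes pb: "is_pullback C f g P p q" and t: "t \<in> hom C W P" "t' \<in> hom C W P"
    and "p \<cdot> t = p \<cdot> t'" "q \<cdot> t = q \<cdot> t'"
  shows "t = t'"
proof -
  have p: "p \<in> hom C P (Dom C f)" "q \<in> hom C P (Dom C g)" "f \<cdot> p = g \<cdot> q"
    and f: "f \<in> hom C (Dom C f) (Cod C f)" "g \<in> hom C (Dom C g) (Cod C f)"
    using pb unfolding is_pullback_def by (auto simp: hom_iff)
  have "f \<cdot> (p \<cdot> t) = g \<cdot> (q \<cdot> t)"
    using comp_reassoc[OF p(3) t(1) p(1) f(1)] comp_assoc_hom[OF t(1) p(2) f(2)] by simp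
  moreover have "p \<cdot> t \<in> hom C W (Dom C f)" "q \<cdot> t \<in> hom C W (Dom C g)"
    using p t by blast+
  moreover have "\<forall>W u v. u \<in> hom C W (Dom C f) \<and> v \<in> hom C W (Dom C g) \<and> f \<cdot> u = g \<cdot> v \<longrightarrow>
      (\<exists>!h. h \<in> hom C W P \<and> p \<cdot> h = u \<and> q \<cdot> h = v)"
    using pb unfolding is_pullback_def by blast
  ultimately have "\<exists>!s. s \<in> hom C W P \<and> p \<cdot> s = p \<cdot> t \<and> q \<cdot> s = q \<cdot> t"
    by blast
  then show ?thesis using assms by metis
qed

lemma kernel_homs:
  assumes "is_kernel C k f" "f \<in> hom C B D"
  shows "k \<in> hom C (Dom C k) B" "f \<cdot> k = zero_arr (Dom C k) D"
proof -
  have "arr k" "Cod C k = Dom C f" "zero_mor C (f \<cdot> k)"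
    using assms(1) unfolding is_kernel_def by blast+
  then show "k \<in> hom C (Dom C k) B" "f \<cdot> k = zero_arr (Dom C k) D"
    using assms(2) by (auto simp: hom_iff zero_mor_iff)
qed

lemma kernel_univ:
  assumes "is_kernel C k f" "f \<in> hom C B D" "u \<in> hom C W B" "f \<cdot> u = zero_arr W D"
  shows "\<exists>!t. t \<in> hom C W (Dom C k) \<and> k \<cdot> t = u"
proof -
  have "\<forall>u. arr u \<and> Cod C u = Dom C f \<and> zero_mor C (f \<cdot> u) \<longrightarrow>
      (\<exists>!h. h \<in> hom C (Dom C u) (Dom C k) \<and> k \<cdot> h = u)"
    using assms(1) unfolding is_kernel_def by blast
  then have "arr u \<and> Cod C u = Dom C f \<and> zero_mor C (f \<cdot> u) \<longrightarrow>
      (\<exists>!h. h \<in> hom C (Dom C u) (Dom C k) \<and> k \<cdot> h = u)"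
    by (rule spec)
  moreover have "zero_mor C (f \<cdot> u)" using assms(2-4) by (blast intro: zero_morI)
  moreover have "Dom C f = B" "Dom C u = W" "arr u" "Cod C u = B"
    using assms(2,3) by (simp_all add: hom_iff)
  ultimately show ?thesis by simp
qed

lemma kernel_lift:
  assumes "is_kernel C k f" "f \<in> hom C B D" "u \<in> hom C W B" "f \<cdot> u = zero_arr W D"
  obtains t where "t \<in> hom C W (Dom C k)" "k \<cdot> t = u"
  using kernel_univ[OF assms] by blast

lemma kernel_eq:
  assumes k: "is_kernel C k f" and t: "t \<in> hom C W (Dom C k)" "t' \<in> hom C W (Dom C k)"
    and "k \<cdot> t = k \<cdot> t'"
  shows "t = t'"
proof -
  have f: "f \<in> hom C (Dom C f) (Cod C f)"
    using k unfolding is_kernel_def hom_iff by blast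
  note kf = kernel_homs[OF k f]
  have "f \<cdot> (k \<cdot> t) = zero_arr (Dom C k) (Cod C f) \<cdot> t"
    by (rule comp_reassoc[OF kf(2) t(1) kf(1) f])
  also have "\<dots> = zero_arr W (Cod C f)"
    using comp_zero_arr_left_hom[OF t(1)] f homD by blast
  finally have "\<exists>!s. s \<in> hom C W (Dom C k) \<and> k \<cdot> s = k \<cdot> t"
    by (rule kernel_univ[OF k f comp_hom[OF t(1) kf(1)]])
  then show ?thesis using assms by metis
qed

lemma cokernel_homs:
  assumes "is_cokernel C q f" "f \<in> hom C X A"
  shows "q \<in> hom C A (Cod C q)" "q \<cdot> f = zero_arr X (Cod C q)"
proof -
  have "arr q" "Dom C q = Cod C f" "zero_mor C (q \<cdot> f)"
    using assms(1) unfolding is_cokernel_def by blast+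
  then show "q \<in> hom C A (Cod C q)" "q \<cdot> f = zero_arr X (Cod C q)"
    using assms(2) by (auto simp: hom_iff zero_mor_iff)
qed

lemma cokernel_desc:
  assumes "is_cokernel C q f" "f \<in> hom C X A" "u \<in> hom C A W" "u \<cdot> f = zero_arr X W"
  obtains t where "t \<in> hom C (Cod C q) W" "t \<cdot> q = u"
proof -
  have "\<forall>u. arr u \<and> Dom C u = Cod C f \<and> zero_mor C (u \<cdot> f) \<longrightarrow>
      (\<exists>!h. h \<in> hom C (Cod C q) (Cod C u) \<and> h \<cdot> q = u)"
    using assms(1) unfolding is_cokernel_def by blast
  then have "arr u \<and> Dom C u = Cod C f \<and> zero_mor C (u \<cdot> f) \<longrightarrow>
      (\<exists>!h. h \<in> hom C (Cod C q) (Cod C u) \<and> h \<cdot> q = u)"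
    by (rule spec)
  moreover have "zero_mor C (u \<cdot> f)" using assms(2-4) by (blast intro: zero_morI)
  moreover have "Cod C f = A" "Cod C u = W" "arr u" "Dom C u = A"
    using assms(2,3) by (simp_all add: hom_iff)
  ultimately have "\<exists>!t. t \<in> hom C (Cod C q) W \<and> t \<cdot> q = u" by simp
  then show ?thesis using that by blast
qed

lemma coequalizer_homs:
  assumes "is_coequalizer C f g e" "f \<in> hom C R B"
  shows "e \<in> hom C B (Cod C e)" "g \<in> hom C R B" "e \<cdot> f = e \<cdot> g"
proof -
  have "arr g" "Dom C f = Dom C g" "Cod C f = Cod C g" "arr e" "Dom C e = Cod C f" "e \<cdot> f = e \<cdot> g"
    using assms(1) unfolding is_coequalizer_def by blast+
  then show "e \<in> hom C B (Cod C e)" "g \<in> hom C R B" "e \<cdot> f = e \<cdot> g"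
    using assms(2) by (auto simp: hom_iff)
qed

lemma coequalizer_univ:
  assumes "is_coequalizer C f g e" "f \<in> hom C R B" "u \<in> hom C B W" "u \<cdot> f = u \<cdot> g"
  shows "\<exists>!t. t \<in> hom C (Cod C e) W \<and> t \<cdot> e = u"
proof -
  have "\<forall>u. u \<in> Arr C \<and> Dom C u = Cod C f \<and> u \<cdot> f = u \<cdot> g \<longrightarrow>
      (\<exists>!h. h \<in> hom C (Cod C e) (Cod C u) \<and> h \<cdot> e = u)"
    using assms(1) unfolding is_coequalizer_def by blast
  then have "u \<in> Arr C \<and> Dom C u = Cod C f \<and> u \<cdot> f = u \<cdot> g \<longrightarrow>
      (\<exists>!h. h \<in> hom C (Cod C e) (Cod C u) \<and> h \<cdot> e = u)"
    by (rule spec)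
  moreover have "Cod C f = B" "Cod C u = W" "arr u" "Dom C u = B"
    using assms(2,3) by (simp_all add: hom_iff)
  ultimately show ?thesis using assms(4) by simp
qed

lemma coequalizer_desc:
  assumes "is_coequalizer C f g e" "f \<in> hom C R B" "u \<in> hom C B W" "u \<cdot> f = u \<cdot> g"
  obtains t where "t \<in> hom C (Cod C e) W" "t \<cdot> e = u"
  using coequalizer_univ[OF assms] by blast

definition epi :: "'a \<Rightarrow> bool" where
  "epi e \<longleftrightarrow> arr e \<and>
     (\<forall>a b W. a \<in> hom C (Cod C e) W \<and> b \<in> hom C (Cod C e) W \<and> a \<cdot> e = b \<cdot> e \<longrightarrow> a = b)"

lemma epiD: "epi e \<Longrightarrow> a \<in> hom C (Cod C e) W \<Longrightarrow> b \<in> hom C (Cod C e) W \<Longrightarrow> a \<cdot> e = b \<cdot> e \<Longrightarrow> a = b"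
  unfolding epi_def by blast

lemma coequalizer_epi:
  assumes co: "is_coequalizer C f g e"
  shows "epi e"
  unfolding epi_def
proof (intro conjI allI impI)
  show "arr e" using co unfolding is_coequalizer_def by blast
  fix a b W assume ab: "a \<in> hom C (Cod C e) W \<and> b \<in> hom C (Cod C e) W \<and> a \<cdot> e = b \<cdot> e"
  have f: "f \<in> hom C (Dom C f) (Cod C f)"
    using co unfolding is_coequalizer_def hom_iff by blast
  note e = coequalizer_homs[OF co f]
  have a: "a \<in> hom C (Cod C e) W" using ab by blast
  have "(a \<cdot> e) \<cdot> f = (a \<cdot> e) \<cdot> g"
    using comp_assoc_hom[OF f e(1) a] comp_assoc_hom[OF e(2) e(1) a] e(3) by simp
  then have "\<exists>!t. t \<in> hom C (Cod C e) W \<and> t \<cdot> e = a \<cdot> e"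
    using coequalizer_univ[OF co f] e(1) ab by blast
  then show "a = b" using ab by metis
qed

lemma regular_epi_epi: "regular_epi C e \<Longrightarrow> epi e"
  unfolding regular_epi_def using coequalizer_epi by blast

lemma coproduct2_copair:
  assumes "is_coproduct2 C A B S i1 i2" "f \<in> hom C A W" "g \<in> hom C B W"
  obtains t where "t \<in> hom C S W" "t \<cdot> i1 = f" "t \<cdot> i2 = g"
  using assms unfolding is_coproduct2_def by metis

lemma coproduct2_eq:
  assumes cp: "is_coproduct2 C A B S i1 i2" and t: "t \<in> hom C S W" "t' \<in> hom C S W"
    and "t \<cdot> i1 = t' \<cdot> i1" "t \<cdot> i2 = t' \<cdot> i2"
  shows "t = t'"
proof -
  have i: "i1 \<in> hom C A S" "i2 \<in> hom C B S"
    using cp unfolding is_coproduct2_def by blast+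
  have "\<forall>W f g. f \<in> hom C A W \<and> g \<in> hom C B W \<longrightarrow>
      (\<exists>!h. h \<in> hom C S W \<and> h \<cdot> i1 = f \<and> h \<cdot> i2 = g)"
    using cp unfolding is_coproduct2_def by blast
  then have "\<exists>!s. s \<in> hom C S W \<and> s \<cdot> i1 = t \<cdot> i1 \<and> s \<cdot> i2 = t \<cdot> i2"
    using i t(1) by blast
  then show ?thesis using assms by metis
qed

lemma coproduct3_eq:
  assumes cp: "is_coproduct3 C A B D S i1 i2 i3" and t: "t \<in> hom C S W" "t' \<in> hom C S W"
    and "t \<cdot> i1 = t' \<cdot> i1" "t \<cdot> i2 = t' \<cdot> i2" "t \<cdot> i3 = t' \<cdot> i3"
  shows "t = t'"
proof -
  have i: "i1 \<in> hom C A S" "i2 \<in> hom C B S" "i3 \<in> hom C D S"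
    using cp unfolding is_coproduct3_def by blast+
  have "\<forall>W f g k. f \<in> hom C A W \<and> g \<in> hom C B W \<and> k \<in> hom C D W \<longrightarrow>
      (\<exists>!h. h \<in> hom C S W \<and> h \<cdot> i1 = f \<and> h \<cdot> i2 = g \<and> h \<cdot> i3 = k)"
    using cp unfolding is_coproduct3_def by blast
  then have "\<exists>!s. s \<in> hom C S W \<and> s \<cdot> i1 = t \<cdot> i1 \<and> s \<cdot> i2 = t \<cdot> i2 \<and> s \<cdot> i3 = t \<cdot> i3"
    using i t(1) by blast
  then show ?thesis using assms by metis
qed

lemma zigzag_homs:
  assumes "is_zigzag_limit C qx qy L l1 l2 l3" "qx \<in> hom C A Q1" "qy \<in> hom C A Q2"
  shows "l1 \<in> hom C L A" "l2 \<in> hom C L A" "l3 \<in> hom C L A"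
    "qx \<cdot> l1 = qx \<cdot> l2" "qy \<cdot> l2 = qy \<cdot> l3"
proof -
  have "Dom C qx = A" using assms(2) by (simp add: hom_iff)
  moreover have "l1 \<in> hom C L (Dom C qx)" "l2 \<in> hom C L (Dom C qx)" "l3 \<in> hom C L (Dom C qx)"
    "qx \<cdot> l1 = qx \<cdot> l2" "qy \<cdot> l2 = qy \<cdot> l3"
    using assms(1) unfolding is_zigzag_limit_def by blast+
  ultimately show "l1 \<in> hom C L A" "l2 \<in> hom C L A" "l3 \<in> hom C L A"
    "qx \<cdot> l1 = qx \<cdot> l2" "qy \<cdot> l2 = qy \<cdot> l3" by simp_all
qed

lemma zigzag_univ:
  assumes "is_zigzag_limit C qx qy L l1 l2 l3" "qx \<in> hom C A Q1"
    and "u1 \<in> hom C W A" "u2 \<in> hom C W A" "u3 \<in> hom C W A"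
    and "qx \<cdot> u1 = qx \<cdot> u2" "qy \<cdot> u2 = qy \<cdot> u3"
  shows "\<exists>!t. t \<in> hom C W L \<and> l1 \<cdot> t = u1 \<and> l2 \<cdot> t = u2 \<and> l3 \<cdot> t = u3"
proof -
  have "Dom C qx = A" using assms(2) by (simp add: hom_iff)
  moreover have "\<forall>W u1 u2 u3. u1 \<in> hom C W (Dom C qx) \<and> u2 \<in> hom C W (Dom C qx) \<and>
      u3 \<in> hom C W (Dom C qx) \<and> qx \<cdot> u1 = qx \<cdot> u2 \<and> qy \<cdot> u2 = qy \<cdot> u3 \<longrightarrow>
      (\<exists>!h. h \<in> hom C W L \<and> l1 \<cdot> h = u1 \<and> l2 \<cdot> h = u2 \<and> l3 \<cdot> h = u3)"
    using assms(1) unfolding is_zigzag_limit_def by blast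
  ultimately show ?thesis using assms(3-7) by blast
qed

lemma zigzag_lift:
  assumes "is_zigzag_limit C qx qy L l1 l2 l3" "qx \<in> hom C A Q1"
    and "u1 \<in> hom C W A" "u2 \<in> hom C W A" "u3 \<in> hom C W A"
    and "qx \<cdot> u1 = qx \<cdot> u2" "qy \<cdot> u2 = qy \<cdot> u3"
  obtains t where "t \<in> hom C W L" "l1 \<cdot> t = u1" "l2 \<cdot> t = u2" "l3 \<cdot> t = u3"
  using zigzag_univ[OF assms] by blast

lemma zigzag_eq:
  assumes z: "is_zigzag_limit C qx qy L l1 l2 l3" and q: "qx \<in> hom C A Q1" "qy \<in> hom C A Q2"
    and t: "t \<in> hom C W L" "t' \<in> hom C W L"
    and "l1 \<cdot> t = l1 \<cdot> t'" "l2 \<cdot> t = l2 \<cdot> t'" "l3 \<cdot> t = l3 \<cdot> t'"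
  shows "t = t'"
proof -
  note l = zigzag_homs[OF z q]
  have "qx \<cdot> (l1 \<cdot> t) = qx \<cdot> (l2 \<cdot> t)" "qy \<cdot> (l2 \<cdot> t) = qy \<cdot> (l3 \<cdot> t)"
    using comp_reassoc[OF l(4) t(1) l(1) q(1)] comp_reassoc[OF l(5) t(1) l(2) q(2)]
      comp_assoc_hom[OF t(1) l(2) q(1)] comp_assoc_hom[OF t(1) l(3) q(2)] by simp_all
  then have "\<exists>!s. s \<in> hom C W L \<and> l1 \<cdot> s = l1 \<cdot> t \<and> l2 \<cdot> s = l2 \<cdot> t \<and> l3 \<cdot> s = l3 \<cdot> t"
    using l t by (intro zigzag_univ[OF z q(1)]) blast+
  then show ?thesis using assms by metis
qed

subsection \<open>Finite limits\<close>

lemma finitely_complete: "finitely_complete C"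
  using homological by (simp add: homological_def regular_category_def)

lemma pullback_exists:
  assumes "f \<in> hom C X Z" "g \<in> hom C Y Z"
  obtains P p q where "is_pullback C f g P p q"
  using finitely_complete assms unfolding finitely_complete_def by (metis homD)

text \<open>The graphs \<open>\<langle>1, f\<rangle>, \<langle>1, f'\<rangle> : B \<rightarrow> B \<times> D\<close>, with the product constructed as a pullback over a
  terminal object.\<close>
lemma graphs_exist:
  assumes f: "f \<in> hom C B D" and f': "f' \<in> hom C B D"
  obtains P pr1 pr2 a a' where "pr1 \<in> hom C P B" "pr2 \<in> hom C P D"
    "\<forall>W t t'. t \<in> hom C W P \<and> t' \<in> hom C W P \<and> pr1 \<cdot> t = pr1 \<cdot> t' \<and> pr2 \<cdot> t = pr2 \<cdot> t'
       \<longrightarrow> t = t'"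
    "a \<in> hom C B P" "pr1 \<cdot> a = Id C B" "pr2 \<cdot> a = f"
    "a' \<in> hom C B P" "pr1 \<cdot> a' = Id C B" "pr2 \<cdot> a' = f'"
proof -
  obtain T where T: "terminal C T" using finitely_complete unfolding finitely_complete_def by blast
  have oB: "B \<in> Obj C" and oD: "D \<in> Obj C" using f homD by blast+
  obtain tB where tB: "tB \<in> hom C B T" using T oB unfolding terminal_def by blast
  obtain tD where tD: "tD \<in> hom C D T" using T oD unfolding terminal_def by blast
  obtain P pr1 pr2 where PB: "is_pullback C tB tD P pr1 pr2" using pullback_exists[OF tB tD] .
  note pr = pullback_homs[OF PB tB tD]
  have "tB \<cdot> Id C B = tD \<cdot> f" "tB \<cdot> Id C B = tD \<cdot> f'"
    using T tB tD f f' terminal_unique by (metis comp_hom id_hom oB)+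
  then obtain a a' where "a \<in> hom C B P" "pr1 \<cdot> a = Id C B" "pr2 \<cdot> a = f"
    and "a' \<in> hom C B P" "pr1 \<cdot> a' = Id C B" "pr2 \<cdot> a' = f'"
    using pullback_lift[OF PB tB tD id_hom[OF oB]] f f' by metis
  moreover have "\<forall>W t t'. t \<in> hom C W P \<and> t' \<in> hom C W P \<and> pr1 \<cdot> t = pr1 \<cdot> t' \<and>
      pr2 \<cdot> t = pr2 \<cdot> t' \<longrightarrow> t = t'"
    using pullback_eq[OF PB] by blast
  ultimately show ?thesis using pr(1,2) by (intro that)
qed

text \<open>The equaliser of \<open>f, f'\<close> is the pullback of their graphs.\<close>
lemma equalizer_exists:
  assumes f: "f \<in> hom C B D" and f': "f' \<in> hom C B D"
  obtains E e where "e \<in> hom C E B" "mono C e" "f \<cdot> e = f' \<cdot> e"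
    "\<forall>W u. u \<in> hom C W B \<and> f \<cdot> u = f' \<cdot> u \<longrightarrow> (\<exists>w. w \<in> hom C W E \<and> e \<cdot> w = u)"
proof -
  obtain P pr1 pr2 a a' where pr: "pr1 \<in> hom C P B" "pr2 \<in> hom C P D"
    and pr_eq: "\<forall>W t t'. t \<in> hom C W P \<and> t' \<in> hom C W P \<and> pr1 \<cdot> t = pr1 \<cdot> t' \<and>
      pr2 \<cdot> t = pr2 \<cdot> t' \<longrightarrow> t = t'"
    and a: "a \<in> hom C B P" "pr1 \<cdot> a = Id C B" "pr2 \<cdot> a = f"
    and a': "a' \<in> hom C B P" "pr1 \<cdot> a' = Id C B" "pr2 \<cdot> a' = f'"
    by (rule graphs_exist[OF f f'])
  obtain E e1 e2 where PB2: "is_pullback C a a' E e1 e2" using pullback_exists[OF a(1) a'(1)] .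
  note e = pullback_homs[OF PB2 a(1) a'(1)]
  have "e1 = pr1 \<cdot> (a \<cdot> e1)"
    using comp_reassoc[OF a(2) e(1) a(1) pr(1)] comp_id_left_hom e(1) by metis
  also have "\<dots> = pr1 \<cdot> (a' \<cdot> e2)" using e by simp
  also have "\<dots> = e2" using comp_reassoc[OF a'(2) e(2) a'(1) pr(1)] comp_id_left_hom e(2) by metis
  finally have e12: "e1 = e2" .
  have "f \<cdot> e1 = pr2 \<cdot> (a \<cdot> e1)" using comp_reassoc[OF a(3) e(1) a(1) pr(2)] by simp
  also have "\<dots> = pr2 \<cdot> (a' \<cdot> e2)" using e by simp
  also have "\<dots> = f' \<cdot> e1" using comp_reassoc[OF a'(3) e(2) a'(1) pr(2)] e12 by simp
  finally have fe: "f \<cdot> e1 = f' \<cdot> e1" .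
  have mono: "mono C e1"
  proof (rule monoI)
    show "arr e1" using e homD by blast
    fix W x y assume xy: "x \<in> hom C W (Dom C e1)" "y \<in> hom C W (Dom C e1)" "e1 \<cdot> x = e1 \<cdot> y"
    have "Dom C e1 = E" using e homD by blast
    then show "x = y" using pullback_eq[OF PB2] xy e12 by simp
  qed
  have "\<forall>W u. u \<in> hom C W B \<and> f \<cdot> u = f' \<cdot> u \<longrightarrow> (\<exists>w. w \<in> hom C W E \<and> e1 \<cdot> w = u)"
  proof (intro allI impI)
    fix W u assume "u \<in> hom C W B \<and> f \<cdot> u = f' \<cdot> u"
    then have u: "u \<in> hom C W B" "f \<cdot> u = f' \<cdot> u" by blast+
    have "pr1 \<cdot> (a \<cdot> u) = pr1 \<cdot> (a' \<cdot> u)" "pr2 \<cdot> (a \<cdot> u) = pr2 \<cdot> (a' \<cdot> u)"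
      using comp_reassoc[OF a(2) u(1) a(1) pr(1)] comp_reassoc[OF a'(2) u(1) a'(1) pr(1)]
        comp_reassoc[OF a(3) u(1) a(1) pr(2)] comp_reassoc[OF a'(3) u(1) a'(1) pr(2)] u(2)
      by simp_all
    then have "a \<cdot> u = a' \<cdot> u"
      using pr_eq comp_hom[OF u(1) a(1)] comp_hom[OF u(1) a'(1)] by blast
    from pullback_lift[OF PB2 a(1) a'(1) u(1) u(1) this]
    show "\<exists>w. w \<in> hom C W E \<and> e1 \<cdot> w = u" by blast
  qed
  then show ?thesis by (rule that[OF e(1) mono fe])
qed

text \<open>The kernel of \<open>f\<close> is the pullback of \<open>f\<close> along \<open>0 \<rightarrow> D\<close>.\<close>
lemma kernel_exists:
  assumes f: "f \<in> hom C B D"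
  obtains k where "is_kernel C k f"
proof -
  obtain Z where Z: "zero_obj C Z" using pointed unfolding pointed_def by blast
  have oZ: "Z \<in> Obj C" using zero_obj_Obj[OF Z] .
  have oD: "D \<in> Obj C" using f homD by blast
  have zZD: "zero_arr Z D \<in> hom C Z D" using oZ oD by blast
  obtain P a b where PB: "is_pullback C f (zero_arr Z D) P a b" using pullback_exists[OF f zZD] .
  note ab = pullback_homs[OF PB f zZD]
  have fa: "f \<cdot> a = zero_arr P D" using ab comp_zero_arr_left_hom[OF ab(2) oD] by simp
  have "is_kernel C a f" unfolding is_kernel_def
  proof (intro conjI allI impI)
    show "arr f" "arr a" "Cod C a = Dom C f" using f ab(1) by (simp_all add: hom_iff)
    show "zero_mor C (f \<cdot> a)" using zero_morI[OF comp_hom[OF ab(1) f] fa] .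
    fix u assume u: "arr u \<and> Cod C u = Dom C f \<and> zero_mor C (f \<cdot> u)"
    define W where "W = Dom C u"
    have u1: "u \<in> hom C W B" using u f W_def by (simp add: hom_iff)
    have oW: "W \<in> Obj C" using u1 homD by blast
    have "f \<cdot> u = zero_arr Z D \<cdot> zero_arr W Z"
      using zero_morD[OF _ comp_hom[OF u1 f]] u comp_zero_arr_left_hom[OF zero_arr_hom[OF oW oZ] oD]
      by simp
    then obtain t where t: "t \<in> hom C W P" "a \<cdot> t = u" "b \<cdot> t = zero_arr W Z"
      using pullback_lift[OF PB f zZD u1 zero_arr_hom[OF oW oZ]] by blast
    show "\<exists>!t. t \<in> hom C (Dom C u) (Dom C a) \<and> a \<cdot> t = u"
    proof (rule ex1I[of _ t])
      show "t \<in> hom C (Dom C u) (Dom C a) \<and> a \<cdot> t = u" using t ab W_def by (simp add: hom_iff)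
      fix t' assume t': "t' \<in> hom C (Dom C u) (Dom C a) \<and> a \<cdot> t' = u"
      then have t'': "t' \<in> hom C W P" using ab W_def by (simp add: hom_iff)
      show "t' = t"
      proof (rule pullback_eq[OF PB t'' t(1)])
        show "a \<cdot> t' = a \<cdot> t" using t t' by simp
        show "b \<cdot> t' = b \<cdot> t"
          using hom_to_zero_obj[OF Z comp_hom[OF t'' ab(2)]]
            hom_to_zero_obj[OF Z comp_hom[OF t(1) ab(2)]]
          by simp
      qed
    qed
  qed
  then show ?thesis using that by blast
qed

subsection \<open>Consequences of the split short five lemma\<close>

lemma kernel_comp_mono:
  assumes k: "is_kernel C k p" and p: "p \<in> hom C B A" and kK: "k \<in> hom C K B"
    and m: "mono C m" "m \<in> hom C E B" and k': "k' \<in> hom C K E" "m \<cdot> k' = k"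
  shows "is_kernel C k' (p \<cdot> m)"
  unfolding is_kernel_def
proof (intro conjI allI impI)
  have DK: "Dom C k = K" using kK by (simp add: hom_iff)
  have pm: "p \<cdot> m \<in> hom C E A" using p m by blast
  show "arr (p \<cdot> m)" "arr k'" "Cod C k' = Dom C (p \<cdot> m)" using pm k' by (simp_all add: hom_iff)
  have "(p \<cdot> m) \<cdot> k' = zero_arr K A"
    using comp_assoc_hom[OF k'(1) m(2) p] k'(2) kernel_homs[OF k p] DK by simp
  then show "zero_mor C ((p \<cdot> m) \<cdot> k')" using zero_morI comp_hom[OF k'(1) pm] by blast
  fix u assume u: "arr u \<and> Cod C u = Dom C (p \<cdot> m) \<and> zero_mor C ((p \<cdot> m) \<cdot> u)"
  define W where "W = Dom C u"
  have u1: "u \<in> hom C W E" using u pm W_def by (simp add: hom_iff)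
  have "p \<cdot> (m \<cdot> u) = zero_arr W A"
    using zero_morD[OF _ comp_hom[OF u1 pm]] u comp_assoc_hom[OF u1 m(2) p] by simp
  from kernel_lift[OF k p comp_hom[OF u1 m(2)] this]
  obtain t where t: "t \<in> hom C W K" "k \<cdot> t = m \<cdot> u" unfolding DK .
  have "m \<cdot> (k' \<cdot> t) = m \<cdot> u" using comp_reassoc[OF k'(2) t(1) k'(1) m(2)] t(2) by simp
  then have kt: "k' \<cdot> t = u"
    using monoD[OF m(1)] comp_hom[OF t(1) k'(1)] u1 m(2) by (simp add: hom_iff)
  show "\<exists>!t. t \<in> hom C (Dom C u) (Dom C k') \<and> k' \<cdot> t = u"
  proof (rule ex1I[of _ t])
    show "t \<in> hom C (Dom C u) (Dom C k') \<and> k' \<cdot> t = u" using t kt k' W_def by (simp add: hom_iff)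
    fix t' assume t': "t' \<in> hom C (Dom C u) (Dom C k') \<and> k' \<cdot> t' = u"
    then have t'': "t' \<in> hom C W K" using k' W_def by (simp add: hom_iff)
    have "k \<cdot> t' = m \<cdot> u" using comp_reassoc[OF k'(2) t'' k'(1) m(2)] t' by simp
    then show "t' = t" using kernel_eq[OF k] t t'' DK by simp
  qed
qed

text \<open>Restricting the split extension along \<open>m\<close> gives a morphism of split extensions which is the
  identity on kernels and on codomains.\<close>
lemma split_ext_mono_iso:
  assumes k: "is_kernel C k p" and p: "p \<in> hom C B A" and kK: "k \<in> hom C K B"
    and s: "s \<in> hom C A B" "p \<cdot> s = Id C A"
    and m: "mono C m" "m \<in> hom C E B"
    and k': "k' \<in> hom C K E" "m \<cdot> k' = k" and s': "s' \<in> hom C A E" "m \<cdot> s' = s"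
  shows "iso C m"
proof -
  have oA: "A \<in> Obj C" and oK: "K \<in> Obj C" using p kK homD by blast+
  have pm: "p \<cdot> m \<in> hom C E A" using p m by blast
  have D: "Dom C (p \<cdot> m) = E" "Cod C (p \<cdot> m) = A" "Dom C k' = K" "Dom C k = K"
    "Dom C p = B" "Cod C p = A"
    using pm k' kK p by (simp_all add: hom_iff)
  show ?thesis
  proof (rule homological[unfolded homological_def split_short_five_def,
        THEN conjunct2, THEN conjunct2, rule_format, of k' "p \<cdot> m" s' k p s m "Id C K" "Id C A"],
      intro conjI)
    show "is_kernel C k' (p \<cdot> m)" using kernel_comp_mono[OF k p kK m k'] .
    show "is_kernel C k p" by fact
    show "s' \<in> hom C (Cod C (p \<cdot> m)) (Dom C (p \<cdot> m))" "s \<in> hom C (Cod C p) (Dom C p)"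
      using s s' D by simp_all
    show "(p \<cdot> m) \<cdot> s' = Id C (Cod C (p \<cdot> m))" "p \<cdot> s = Id C (Cod C p)"
      using comp_assoc_hom[OF s'(1) m(2) p] s'(2) s(2) D by simp_all
    show "m \<in> hom C (Dom C (p \<cdot> m)) (Dom C p)" using m D by simp
    show "Id C K \<in> hom C (Dom C k') (Dom C k)" "Id C A \<in> hom C (Cod C (p \<cdot> m)) (Cod C p)"
      using D oK oA by auto
    show "k \<cdot> Id C K = m \<cdot> k'" using k'(2) comp_id_right_hom[OF kK] by simp
    show "p \<cdot> m = Id C A \<cdot> (p \<cdot> m)" using comp_id_left_hom[OF pm] by simp
    show "m \<cdot> s' = s \<cdot> Id C A" using s'(2) comp_id_right_hom[OF s(1)] by simp
    show "iso C (Id C K)" "iso C (Id C A)" using iso_id oK oA by auto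
  qed
qed

text \<open>The equaliser of two maps agreeing on the kernel and on the section is invertible.\<close>
lemma split_ext_jointly_epi:
  assumes k: "is_kernel C k p" and p: "p \<in> hom C B A" and kK: "k \<in> hom C K B"
    and s: "s \<in> hom C A B" "p \<cdot> s = Id C A"
    and f: "f \<in> hom C B D" "f' \<in> hom C B D" and "f \<cdot> k = f' \<cdot> k" and "f \<cdot> s = f' \<cdot> s"
  shows "f = f'"
proof -
  obtain e E where e: "e \<in> hom C E B" "mono C e" "f \<cdot> e = f' \<cdot> e"
    and univ: "\<forall>W u. u \<in> hom C W B \<and> f \<cdot> u = f' \<cdot> u \<longrightarrow> (\<exists>w. w \<in> hom C W E \<and> e \<cdot> w = u)"
    by (rule equalizer_exists[OF f])
  obtain k' where k': "k' \<in> hom C K E" "e \<cdot> k' = k"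
    using univ[rule_format, OF conjI[OF kK assms(8)]] by blast
  obtain s' where s': "s' \<in> hom C A E" "e \<cdot> s' = s"
    using univ[rule_format, OF conjI[OF s(1) assms(9)]] by blast
  have "iso C e" using split_ext_mono_iso[OF k p kK s e(2) e(1) k' s'] .
  then obtain g where g: "g \<in> hom C B E" "e \<cdot> g = Id C B" using isoE[OF _ e(1)] by blast
  have "f = (f \<cdot> e) \<cdot> g"
    using comp_assoc_hom[OF g(1) e(1) f(1)] g(2) comp_id_right_hom[OF f(1)] by simp
  also have "\<dots> = f'"
    using comp_assoc_hom[OF g(1) e(1) f(2)] g(2) comp_id_right_hom[OF f(2)] e(3) by simp
  finally show ?thesis .
qed

lemma pullback_mono:
  assumes pb: "is_pullback C f m N n1 n2" and f: "f \<in> hom C B D" and m: "m \<in> hom C M D" "mono C m"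
  shows "mono C n1"
proof (rule monoI)
  note n = pullback_homs[OF pb f m(1)]
  show "arr n1" using n homD by blast
  fix W a b assume ab: "a \<in> hom C W (Dom C n1)" "b \<in> hom C W (Dom C n1)" "n1 \<cdot> a = n1 \<cdot> b"
  have ab': "a \<in> hom C W N" "b \<in> hom C W N" using ab n by (simp_all add: hom_iff)
  have "m \<cdot> (n2 \<cdot> a) = f \<cdot> (n1 \<cdot> a)"
    using comp_reassoc[OF n(3) ab'(1) n(1) f] comp_assoc_hom[OF ab'(1) n(2) m(1)] by simp
  also have "\<dots> = m \<cdot> (n2 \<cdot> b)"
    using comp_reassoc[OF n(3) ab'(2) n(1) f] comp_assoc_hom[OF ab'(2) n(2) m(1)] ab(3) by simp
  finally have "n2 \<cdot> a = n2 \<cdot> b"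
    using monoD[OF m(2)] comp_hom[OF ab'(1) n(2)] comp_hom[OF ab'(2) n(2)] m(1)
    by (simp add: hom_iff)
  then show "a = b" using pullback_eq[OF pb ab'] ab(3) by blast
qed

lemma split_ext_factor_through_mono:
  assumes k: "is_kernel C k p" and p: "p \<in> hom C B A" and kK: "k \<in> hom C K B"
    and s: "s \<in> hom C A B" "p \<cdot> s = Id C A"
    and f: "f \<in> hom C B D" and m: "m \<in> hom C M D" "mono C m"
    and a: "a \<in> hom C A M" "f \<cdot> s = m \<cdot> a" and b: "b \<in> hom C K M" "f \<cdot> k = m \<cdot> b"
  obtains d where "d \<in> hom C B M" "m \<cdot> d = f"
proof -
  obtain N n1 n2 where pb: "is_pullback C f m N n1 n2" using pullback_exists[OF f m(1)] .
  note n = pullback_homs[OF pb f m(1)]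
  obtain s' where s': "s' \<in> hom C A N" "n1 \<cdot> s' = s" using pullback_lift[OF pb f m(1) s(1) a] .
  obtain k' where k': "k' \<in> hom C K N" "n1 \<cdot> k' = k" using pullback_lift[OF pb f m(1) kK b] .
  have "iso C n1" using split_ext_mono_iso[OF k p kK s pullback_mono[OF pb f m] n(1) k' s'] .
  then obtain g where g: "g \<in> hom C B N" "n1 \<cdot> g = Id C B" using isoE[OF _ n(1)] by blast
  have "m \<cdot> (n2 \<cdot> g) = f \<cdot> (n1 \<cdot> g)"
    using comp_reassoc[OF n(3) g(1) n(1) f] comp_assoc_hom[OF g(1) n(2) m(1)] by simp
  also have "\<dots> = f" using g(2) comp_id_right_hom[OF f] by simp
  finally show ?thesis using that comp_hom[OF g(1) n(2)] by blast
qed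

text \<open>The kernel of the first projection of the kernel pair of \<open>m\<close> and the diagonal are jointly
  epimorphic, and they agree under both projections.\<close>
lemma mono_if_zero_kernel:
  assumes m: "m \<in> hom C E B"
    and zero: "\<And>W j. j \<in> hom C W E \<Longrightarrow> m \<cdot> j = zero_arr W B \<Longrightarrow> j = zero_arr W E"
  shows "mono C m"
proof (rule monoI)
  show "arr m" using m homD by blast
  have oE: "E \<in> Obj C" using m homD by blast
  obtain T s1 s2 where pb: "is_pullback C m m T s1 s2" using pullback_exists[OF m m] .
  note s = pullback_homs[OF pb m m]
  obtain dl where dl: "dl \<in> hom C E T" "s1 \<cdot> dl = Id C E" "s2 \<cdot> dl = Id C E"
    using pullback_lift[OF pb m m id_hom[OF oE] id_hom[OF oE]] by blast
  obtain j where j: "is_kernel C j s1" using kernel_exists[OF s(1)] .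
  define K where "K = Dom C j"
  have jK: "j \<in> hom C K T" "s1 \<cdot> j = zero_arr K E" using kernel_homs[OF j s(1)] K_def by simp_all
  have oK: "K \<in> Obj C" using jK homD by blast
  have "m \<cdot> (s2 \<cdot> j) = m \<cdot> (s1 \<cdot> j)"
    using comp_reassoc[OF s(3) jK(1) s(1) m] comp_assoc_hom[OF jK(1) s(2) m] by simp
  also have "\<dots> = zero_arr K B" using jK(2) comp_zero_arr_right_hom[OF m oK] by simp
  finally have "s2 \<cdot> j = zero_arr K E" using zero comp_hom[OF jK(1) s(2)] by blast
  then have s12: "s1 = s2"
    using split_ext_jointly_epi[OF j s(1) jK(1) dl(1) dl(2) s(1) s(2)] dl jK(2) by simp
  fix W a b assume ab: "a \<in> hom C W (Dom C m)" "b \<in> hom C W (Dom C m)" "m \<cdot> a = m \<cdot> b"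
  have ab': "a \<in> hom C W E" "b \<in> hom C W E" using ab m by (simp_all add: hom_iff)
  obtain t where "t \<in> hom C W T" "s1 \<cdot> t = a" "s2 \<cdot> t = b"
    using pullback_lift[OF pb m m ab'(1) ab'(2) ab(3)] .
  then show "a = b" using s12 by simp
qed

subsection \<open>Regular epimorphisms and images\<close>

lemma regular_epi_pullback: "regular_epi C e \<Longrightarrow> is_pullback C e g P p q \<Longrightarrow> regular_epi C q"
  using homological unfolding homological_def regular_category_def by blast

lemma kernel_pair_coequalizer: "is_pullback C f f P p q \<Longrightarrow> \<exists>e. is_coequalizer C p q e"
  using homological unfolding homological_def regular_category_def by blast

lemma regular_epi_mono_diagonal:
  assumes e: "regular_epi C e" "e \<in> hom C X Y" and m: "m \<in> hom C M D" "mono C m"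
    and a: "a \<in> hom C X M" and b: "b \<in> hom C Y D" and eq: "m \<cdot> a = b \<cdot> e"
  obtains d where "d \<in> hom C Y M" "m \<cdot> d = b"
proof -
  obtain f1 f2 where co: "is_coequalizer C f1 f2 e" using e(1) unfolding regular_epi_def by blast
  define R where "R = Dom C f1"
  have "Cod C f1 = X" "arr f1" using co e(2) unfolding is_coequalizer_def by (auto simp: hom_iff)
  then have f1: "f1 \<in> hom C R X" using R_def by (simp add: hom_iff)
  note f = coequalizer_homs[OF co f1]
  have CY: "Cod C e = Y" using e(2) by (simp add: hom_iff)
  have "m \<cdot> (a \<cdot> f1) = b \<cdot> (e \<cdot> f1)"
    using comp_reassoc[OF eq f1 a m(1)] comp_assoc_hom[OF f1 e(2) b] by simp
  also have "\<dots> = m \<cdot> (a \<cdot> f2)"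
    using comp_reassoc[OF eq f(2) a m(1)] comp_assoc_hom[OF f(2) e(2) b] f(3) by simp
  finally have "a \<cdot> f1 = a \<cdot> f2"
    using monoD[OF m(2)] comp_hom[OF f1 a] comp_hom[OF f(2) a] m(1) by (simp add: hom_iff)
  from coequalizer_desc[OF co f1 a this]
  obtain d where d: "d \<in> hom C Y M" "d \<cdot> e = a" unfolding CY .
  have "(m \<cdot> d) \<cdot> e = b \<cdot> e" using comp_assoc_hom[OF e(2) d(1) m(1)] d(2) eq by simp
  then have "m \<cdot> d = b"
    using epiD[OF coequalizer_epi[OF co]] comp_hom[OF d(1) m(1)] b CY by simp
  then show ?thesis using that d(1) by blast
qed

definition full_image :: "'a \<Rightarrow> bool" where
  "full_image f \<longleftrightarrow> (\<forall>M m e. m \<in> hom C M (Cod C f) \<and> mono C m \<and> regular_epi C e \<and>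
     e \<in> hom C (Dom C f) M \<and> m \<cdot> e = f \<longrightarrow> iso C m)"

lemma full_imageI:
  assumes "\<And>M m e. m \<in> hom C M (Cod C f) \<Longrightarrow> mono C m \<Longrightarrow> regular_epi C e \<Longrightarrow>
      e \<in> hom C (Dom C f) M \<Longrightarrow> m \<cdot> e = f \<Longrightarrow> iso C m"
  shows "full_image f"
  unfolding full_image_def using assms by blast

lemma full_imageD:
  "full_image f \<Longrightarrow> m \<in> hom C M (Cod C f) \<Longrightarrow> mono C m \<Longrightarrow> regular_epi C e \<Longrightarrow>
   e \<in> hom C (Dom C f) M \<Longrightarrow> m \<cdot> e = f \<Longrightarrow> iso C m"
  unfolding full_image_def by blast

text \<open>The kernel of \<open>m\<close> is zero: this is seen after pulling back along the regular epimorphism \<open>e\<close>,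
  where it becomes a statement about the kernel pair of \<open>f\<close>.\<close>
lemma kernel_pair_coequalizer_factor_mono:
  assumes f: "f \<in> hom C B D" and pb: "is_pullback C f f R r1 r2" and co: "is_coequalizer C r1 r2 e"
    and m: "m \<in> hom C (Cod C e) D" "m \<cdot> e = f"
  shows "mono C m"
proof (rule mono_if_zero_kernel[OF m(1)])
  define M where "M = Cod C e"
  note r = pullback_homs[OF pb f f]
  note eh = coequalizer_homs[OF co r(1), folded M_def]
  have oB: "B \<in> Obj C" and oD: "D \<in> Obj C" and oM: "M \<in> Obj C" using f eh(1) homD by blast+
  have re: "regular_epi C e" using co unfolding regular_epi_def by blast
  fix W j assume j: "j \<in> hom C W (Cod C e)" "m \<cdot> j = zero_arr W D"
  then have j1: "j \<in> hom C W M" using M_def by simp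
  have oW: "W \<in> Obj C" using j homD by blast
  obtain W' j' e' where pb2: "is_pullback C e j W' j' e'" using pullback_exists[OF eh(1) j1] .
  note jj = pullback_homs[OF pb2 eh(1) j1]
  have oW': "W' \<in> Obj C" using jj homD by blast
  have "f \<cdot> j' = m \<cdot> (e \<cdot> j')" using comp_reassoc[OF m(2) jj(1) eh(1)] m(1) M_def by simp
  also have "\<dots> = (m \<cdot> j) \<cdot> e'" using jj(3) comp_assoc_hom[OF jj(2) j(1) m(1)] by simp
  also have "\<dots> = f \<cdot> zero_arr W' B"
    using j(2) comp_zero_arr_left_hom[OF jj(2) oD] comp_zero_arr_right_hom[OF f oW'] by simp
  finally obtain t where t: "t \<in> hom C W' R" "r1 \<cdot> t = j'" "r2 \<cdot> t = zero_arr W' B"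
    using pullback_lift[OF pb f f jj(1) zero_arr_hom[OF oW' oB]] by blast
  have "e \<cdot> j' = e \<cdot> zero_arr W' B"
    using comp_reassoc[OF eh(3) t(1) r(1) eh(1)] comp_assoc_hom[OF t(1) r(2) eh(1)] t by simp
  then have "j \<cdot> e' = zero_arr W M \<cdot> e'"
    using jj(3) comp_zero_arr_right_hom[OF eh(1) oW'] comp_zero_arr_left_hom[OF jj(2) oM] by simp
  moreover have "Cod C e' = W" using jj(2) by (simp add: hom_iff)
  ultimately show "j = zero_arr W (Cod C e)"
    using epiD[OF regular_epi_epi[OF regular_epi_pullback[OF re pb2]]] j1 zero_arr_hom[OF oW oM]
      M_def
    by simp
qed

text \<open>The kernel of the first projection factors through the kernel of \<open>f\<close> via the second
  projection, and together with the diagonal it is jointly epimorphic.\<close>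
lemma kernel_pair_coequalized:
  assumes f: "f \<in> hom C B D" and pb: "is_pullback C f f R r1 r2"
    and kf: "is_kernel C kf f" "kf \<in> hom C K B"
    and u: "u \<in> hom C B Z" "u \<cdot> kf = zero_arr K Z"
  shows "u \<cdot> r1 = u \<cdot> r2"
proof -
  note r = pullback_homs[OF pb f f]
  have oB: "B \<in> Obj C" and oZ: "Z \<in> Obj C" using f u homD by blast+
  obtain dl where dl: "dl \<in> hom C B R" "r1 \<cdot> dl = Id C B" "r2 \<cdot> dl = Id C B"
    using pullback_lift[OF pb f f id_hom[OF oB] id_hom[OF oB]] by blast
  obtain j where j: "is_kernel C j r1" using kernel_exists[OF r(1)] .
  define J where "J = Dom C j"
  have jJ: "j \<in> hom C J R" "r1 \<cdot> j = zero_arr J B" using kernel_homs[OF j r(1)] J_def by simp_all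
  have oJ: "J \<in> Obj C" using jJ homD by blast
  have "f \<cdot> (r2 \<cdot> j) = f \<cdot> (r1 \<cdot> j)"
    using comp_reassoc[OF r(3) jJ(1) r(1) f] comp_assoc_hom[OF jJ(1) r(2) f] by simp
  also have "\<dots> = zero_arr J D" using jJ(2) comp_zero_arr_right_hom[OF f oJ] by simp
  finally obtain w where w: "w \<in> hom C J (Dom C kf)" "kf \<cdot> w = r2 \<cdot> j"
    using kernel_lift[OF kf(1) f comp_hom[OF jJ(1) r(2)]] by blast
  have DK: "Dom C kf = K" using kf(2) by (simp add: hom_iff)
  show ?thesis
  proof (rule split_ext_jointly_epi[OF j r(1) jJ(1) dl(1) dl(2)])
    show "u \<cdot> r1 \<in> hom C R Z" "u \<cdot> r2 \<in> hom C R Z" using r u by blast+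
    have "(u \<cdot> r2) \<cdot> j = zero_arr J Z"
      using comp_assoc_hom[OF jJ(1) r(2) u(1)] comp_reassoc[OF u(2) w(1)[unfolded DK] kf(2) u(1)]
        w(2)
        comp_zero_arr_left_hom[OF w(1)[unfolded DK] oZ] by simp
    then show "(u \<cdot> r1) \<cdot> j = (u \<cdot> r2) \<cdot> j"
      using comp_assoc_hom[OF jJ(1) r(1) u(1)] jJ(2) comp_zero_arr_right_hom[OF u(1) oJ] by simp
    show "(u \<cdot> r1) \<cdot> dl = (u \<cdot> r2) \<cdot> dl"
      using comp_assoc_hom[OF dl(1) r(1) u(1)] comp_assoc_hom[OF dl(1) r(2) u(1)] dl by simp
  qed
qed

lemma full_image_cokernel_desc:
  assumes f: "f \<in> hom C B D" and full: "full_image f"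
    and kf: "is_kernel C kf f" "kf \<in> hom C K B"
    and u: "u \<in> hom C B Z" "u \<cdot> kf = zero_arr K Z"
  obtains t where "t \<in> hom C D Z" "t \<cdot> f = u"
proof -
  obtain R r1 r2 where pb: "is_pullback C f f R r1 r2" using pullback_exists[OF f f] .
  note r = pullback_homs[OF pb f f]
  obtain e where co: "is_coequalizer C r1 r2 e" using kernel_pair_coequalizer[OF pb] by blast
  define M where "M = Cod C e"
  note eh = coequalizer_homs[OF co r(1), folded M_def]
  from coequalizer_desc[OF co r(1) f r(3)]
  obtain m where m: "m \<in> hom C M D" "m \<cdot> e = f" unfolding M_def .
  have "regular_epi C e" using co unfolding regular_epi_def by blast
  moreover have "Dom C f = B" "Cod C f = D" using f by (simp_all add: hom_iff)
  ultimately have "iso C m"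
    using full_imageD[OF full _ kernel_pair_coequalizer_factor_mono[OF f pb co m[unfolded M_def]]]
      m eh(1) M_def by simp
  then obtain mi where mi: "mi \<in> hom C D M" "mi \<cdot> m = Id C M" using isoE[OF _ m(1)] by blast
  from coequalizer_desc[OF co r(1) u(1) kernel_pair_coequalized[OF f pb kf u]]
  obtain t where t: "t \<in> hom C M Z" "t \<cdot> e = u" unfolding M_def .
  have "(t \<cdot> mi) \<cdot> f = t \<cdot> (mi \<cdot> (m \<cdot> e))"
    using comp_assoc_hom[OF comp_hom[OF eh(1) m(1)] mi(1) t(1)] m(2) by simp
  also have "\<dots> = u"
    using comp_reassoc[OF mi(2) eh(1) m(1) mi(1)] comp_id_left_hom[OF eh(1)] t(2) by simp
  finally show ?thesis using that comp_hom[OF mi(1) t(1)] by blast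
qed

lemma image_factD:
  assumes "image_fact C f e m" "f \<in> hom C B D"
  shows "regular_epi C e" "mono C m" "e \<in> hom C B (Dom C m)" "m \<in> hom C (Dom C m) D" "m \<cdot> e = f"
proof -
  have "regular_epi C e" "mono C m" "Dom C e = Dom C f" "Cod C e = Dom C m" "Cod C m = Cod C f"
    "f = m \<cdot> e"
    using assms(1) unfolding image_fact_def by blast+
  moreover have "arr e" using regular_epi_epi[OF calculation(1)] unfolding epi_def by blast
  moreover have "arr m" using calculation(2) unfolding mono_def by blast
  ultimately show "regular_epi C e" "mono C m" "e \<in> hom C B (Dom C m)" "m \<in> hom C (Dom C m) D"
    "m \<cdot> e = f"
    using assms(2) by (simp_all add: hom_iff)
qed

lemma kernel_through_factor:
  assumes m: "is_kernel C m f" and f: "f \<in> hom C B F" and q: "q \<in> hom C B Q"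
    and t: "t \<in> hom C Q F" "t \<cdot> q = f" and qm: "q \<cdot> m = zero_arr (Dom C m) Q"
  shows "is_kernel C m q"
  unfolding is_kernel_def
proof (intro conjI allI impI)
  note mh = kernel_homs[OF m f]
  show "arr q" "arr m" "Cod C m = Dom C q" using q mh(1) by (simp_all add: hom_iff)
  show "zero_mor C (q \<cdot> m)" using zero_morI[OF comp_hom[OF mh(1) q] qm] .
  fix u assume u: "arr u \<and> Cod C u = Dom C q \<and> zero_mor C (q \<cdot> u)"
  define W where "W = Dom C u"
  have u1: "u \<in> hom C W B" using u q W_def by (simp add: hom_iff)
  have oW: "W \<in> Obj C" using u1 homD by blast
  have "q \<cdot> u = zero_arr W Q" using zero_morD[OF _ comp_hom[OF u1 q]] u by blast
  then have "f \<cdot> u = zero_arr W F"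
    using comp_reassoc[OF t(2) u1 q t(1)] comp_zero_arr_right_hom[OF t(1) oW] by simp
  from kernel_univ[OF m f u1 this] show "\<exists>!t. t \<in> hom C (Dom C u) (Dom C m) \<and> m \<cdot> t = u"
    unfolding W_def .
qed

lemma normal_image_kernel_of_cokernel:
  assumes x: "x \<in> hom C X A" and im: "image_fact C x ex mx" and nm: "normal_mono C mx"
    and q: "is_cokernel C qx x"
  shows "is_kernel C mx qx"
proof -
  define X' where "X' = Dom C mx"
  note I = image_factD[OF im x, folded X'_def]
  note qh = cokernel_homs[OF q x]
  obtain f0 where f0: "is_kernel C mx f0" using nm unfolding normal_mono_def by blast
  define F where "F = Cod C f0"
  have f0h: "f0 \<in> hom C A F" using f0 I(4) unfolding is_kernel_def F_def by (auto simp: hom_iff)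
  note f0k = kernel_homs[OF f0 f0h, folded X'_def]
  have oX': "X' \<in> Obj C" and oF: "F \<in> Obj C" and oQ: "Cod C qx \<in> Obj C"
    using I(4) f0h qh(1) homD by blast+
  have "(qx \<cdot> mx) \<cdot> ex = zero_arr X' (Cod C qx) \<cdot> ex"
    using comp_assoc_hom[OF I(3) I(4) qh(1)] I(5) qh(2) comp_zero_arr_left_hom[OF I(3) oQ] by simp
  then have qm: "qx \<cdot> mx = zero_arr X' (Cod C qx)"
    using epiD[OF regular_epi_epi[OF I(1)]] comp_hom[OF I(4) qh(1)] zero_arr_hom[OF oX' oQ] I(3)
    by (simp add: hom_iff)
  have "f0 \<cdot> x = zero_arr X F"
    using comp_reassoc[OF f0k(2) I(3) I(4) f0h] I(5) comp_zero_arr_left_hom[OF I(3) oF] by simp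
  from cokernel_desc[OF q x f0h this]
  obtain t where "t \<in> hom C (Cod C qx) F" "t \<cdot> qx = f0" .
  with kernel_through_factor[OF f0 f0h qh(1)] qm show ?thesis unfolding X'_def by blast
qed

lemma image_fact_zero_obj_iff:
  assumes im: "image_fact C f e m" and f: "f \<in> hom C B D"
  shows "zero_obj C (Dom C m) \<longleftrightarrow> f = zero_arr B D"
proof -
  define M where "M = Dom C m"
  note I = image_factD[OF im f, folded M_def]
  have oB: "B \<in> Obj C" and oD: "D \<in> Obj C" and oM: "M \<in> Obj C" using f I(3) homD by blast+
  show ?thesis
    unfolding M_def[symmetric]
  proof
    assume "zero_obj C M"
    then show "f = zero_arr B D"
      using hom_from_zero_obj[OF _ I(4)] I(5) comp_zero_arr_left_hom[OF I(3) oD] by simp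
  next
    assume "f = zero_arr B D"
    then have "m \<cdot> e = m \<cdot> zero_arr B M" using I(5) comp_zero_arr_right_hom[OF I(4) oB] by simp
    then have "e = zero_arr B M"
      using monoD[OF I(2)] I(3,4) zero_arr_hom[OF oB oM] by (simp add: hom_iff)
    then have "Id C M \<cdot> e = zero_arr M M \<cdot> e"
      using comp_id_left_hom[OF I(3)] comp_zero_arr_left_hom[OF I(3) oM] by simp
    then have "Id C M = zero_arr M M"
      using epiD[OF regular_epi_epi[OF I(1)]] id_hom[OF oM] zero_arr_hom[OF oM oM] I(3)
      by (simp add: hom_iff)
    then show "zero_obj C M" by (rule zero_objI[OF oM])
  qed
qed

end

subsection \<open>The comparison map \<open>A + X + Y \<rightarrow> A\<^sub>3\<close>\<close>

text \<open>Rules for diagram chases: the typing facts of the morphisms in the form given by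
  \<open>homD\<close>, and each commutativity equation \<open>a \<cdot> b = c\<close> together with \<open>a \<cdot> (b \<cdot> z) = c \<cdot> z\<close>; with
  \<open>comp_assoc\<close> the simplifier then normalises composites to right-nested form and rewrites them.\<close>
named_theorems chase

locale commutator_setting = homological_category C
  for C :: "('o,'a) cat" +
  fixes X Y A QX QY L KX KY S SX SY P :: 'o
    and x y ex mx ey my qx qy l1 l2 l3 pi1 pi2 rho1 rho2 dX dY
        i1 i2 i3 a1 a2 b1 b2 rX rY q1 q2 fX fY g k h :: 'a
  assumes x: "x \<in> hom C X A" and y: "y \<in> hom C Y A"
    and imx: "image_fact C x ex mx" "normal_mono C mx"
    and imy: "image_fact C y ey my" "normal_mono C my"
    and qx: "is_cokernel C qx x" and QX: "Cod C qx = QX"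
    and qy: "is_cokernel C qy y" and QY: "Cod C qy = QY"
    and A3: "is_zigzag_limit C qx qy L l1 l2 l3"
    and KPX: "is_pullback C qx qx KX pi1 pi2"
    and KPY: "is_pullback C qy qy KY rho1 rho2"
    and dX: "dX \<in> hom C KX L" "l1 \<cdot> dX = pi1" "l2 \<cdot> dX = pi2" "l3 \<cdot> dX = pi2"
    and dY: "dY \<in> hom C KY L" "l1 \<cdot> dY = rho1" "l2 \<cdot> dY = rho1" "l3 \<cdot> dY = rho2"
    and S: "is_coproduct3 C A X Y S i1 i2 i3"
    and SX: "is_coproduct2 C A X SX a1 a2"
    and SY: "is_coproduct2 C A Y SY b1 b2"
    and rX: "rX \<in> hom C SX A" "rX \<cdot> a1 = Id C A" "zero_mor C (rX \<cdot> a2)"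
    and rY: "rY \<in> hom C SY A" "rY \<cdot> b1 = Id C A" "zero_mor C (rY \<cdot> b2)"
    and PB: "is_pullback C rX rY P q1 q2"
    and fX: "fX \<in> hom C S SX" "fX \<cdot> i1 = a1" "fX \<cdot> i2 = a2" "zero_mor C (fX \<cdot> i3)"
    and fY: "fY \<in> hom C S SY" "fY \<cdot> i1 = b1" "zero_mor C (fY \<cdot> i2)" "fY \<cdot> i3 = b2"
    and g: "g \<in> hom C S P" "q1 \<cdot> g = fX" "q2 \<cdot> g = fY"
    and k: "is_kernel C k g"
    and h: "h \<in> hom C S A" "h \<cdot> i1 = Id C A" "h \<cdot> i2 = x" "h \<cdot> i3 = y"
begin

text \<open>Definitions, not abbreviations: otherwise the typing rules for \<open>mx\<close>, \<open>my\<close>, \<open>k\<close> in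
  \<open>chase\<close> would contain the looping rewrite rules \<open>Dom C mx = Dom C mx\<close>, etc.\<close>
definition X' :: 'o where "X' = Dom C mx"
definition Y' :: 'o where "Y' = Dom C my"
definition K :: 'o where "K = Dom C k"

lemma qx_hom: "qx \<in> hom C A QX" and qx_x: "qx \<cdot> x = zero_arr X QX"
  using cokernel_homs[OF qx x] QX by simp_all

lemma qy_hom: "qy \<in> hom C A QY" and qy_y: "qy \<cdot> y = zero_arr Y QY"
  using cokernel_homs[OF qy y] QY by simp_all

lemma image_x: "regular_epi C ex" "mono C mx" "ex \<in> hom C X X'" "mx \<in> hom C X' A" "mx \<cdot> ex = x"
  and image_y: "regular_epi C ey" "mono C my" "ey \<in> hom C Y Y'" "my \<in> hom C Y' A" "my \<cdot> ey = y"
  using image_factD[OF imx(1) x] image_factD[OF imy(1) y] unfolding X'_def Y'_def by simp_all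

lemma mx_kernel: "is_kernel C mx qx" and my_kernel: "is_kernel C my qy"
  using normal_image_kernel_of_cokernel[OF x imx qx] normal_image_kernel_of_cokernel[OF y imy qy] .

lemma qx_mx: "qx \<cdot> mx = zero_arr X' QX" and qy_my: "qy \<cdot> my = zero_arr Y' QY"
  using kernel_homs(2)[OF mx_kernel qx_hom] kernel_homs(2)[OF my_kernel qy_hom]
  by (simp_all add: X'_def Y'_def)

lemmas zigzag = zigzag_homs[OF A3 qx_hom qy_hom]
lemmas kernel_pair_x = pullback_homs[OF KPX qx_hom qx_hom]
lemmas kernel_pair_y = pullback_homs[OF KPY qy_hom qy_hom]
lemmas pb_P = pullback_homs[OF PB rX(1) rY(1)]

lemma injections: "i1 \<in> hom C A S" "i2 \<in> hom C X S" "i3 \<in> hom C Y S"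
    "a1 \<in> hom C A SX" "a2 \<in> hom C X SX" "b1 \<in> hom C A SY" "b2 \<in> hom C Y SY"
  using S SX SY unfolding is_coproduct3_def is_coproduct2_def by blast+

lemma zero_components: "rX \<cdot> a2 = zero_arr X A" "rY \<cdot> b2 = zero_arr Y A"
    "fX \<cdot> i3 = zero_arr Y SX" "fY \<cdot> i2 = zero_arr X SY"
  using zero_morD[OF rX(3) comp_hom[OF injections(5) rX(1)]]
    zero_morD[OF rY(3) comp_hom[OF injections(7) rY(1)]]
    zero_morD[OF fX(4) comp_hom[OF injections(3) fX(1)]]
    zero_morD[OF fY(3) comp_hom[OF injections(2) fY(1)]]
  by simp_all

lemma k_hom: "k \<in> hom C K S" and g_k: "g \<cdot> k = zero_arr K P"
  using kernel_homs[OF k g(1)] by (simp_all add: K_def)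

lemmas homs = x y qx_hom qy_hom image_x(3,4) image_y(3,4) zigzag(1-3) kernel_pair_x(1,2)
  kernel_pair_y(1,2) dX(1) dY(1) injections rX(1) rY(1) pb_P(1,2) fX(1) fY(1) g(1) k_hom h(1)

lemmas eqs = qx_x qy_y image_x(5) image_y(5) qx_mx qy_my zigzag(4,5) kernel_pair_x(3)
  kernel_pair_y(3) dX(2-4) dY(2-4) rX(2) rY(2) zero_components pb_P(3) fX(2,3) fY(2,4) g(2,3)
  g_k h(2-4)

lemma objs[simp]: "A \<in> Obj C" "X \<in> Obj C" "Y \<in> Obj C" "QX \<in> Obj C" "QY \<in> Obj C" "L \<in> Obj C"
  "KX \<in> Obj C" "KY \<in> Obj C" "S \<in> Obj C" "SX \<in> Obj C" "SY \<in> Obj C" "P \<in> Obj C"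
  "X' \<in> Obj C" "Y' \<in> Obj C" "K \<in> Obj C"
  using x qx_hom qy_hom zigzag(1) dX(1) dY(1) injections(1) rX(1) rY(1) pb_P(1) image_x(3)
    image_y(3)
    k_hom by (auto dest!: homD)

declare homs[THEN homD, chase] eqs[chase] eqs[THEN comp_reassoc_arr, chase]

definition copair_x :: 'a where "copair_x = (SOME c. c \<in> hom C SX A \<and> c \<cdot> a1 = Id C A \<and> c \<cdot> a2 = x)"
definition copair_y :: 'a where "copair_y = (SOME c. c \<in> hom C SY A \<and> c \<cdot> b1 = Id C A \<and> c \<cdot> b2 = y)"

lemma copair_x: "copair_x \<in> hom C SX A" "copair_x \<cdot> a1 = Id C A" "copair_x \<cdot> a2 = x"
proof -
  have "\<exists>c. c \<in> hom C SX A \<and> c \<cdot> a1 = Id C A \<and> c \<cdot> a2 = x"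
    using coproduct2_copair[OF SX id_hom[OF objs(1)] x] by blast
  from someI_ex[OF this] show "copair_x \<in> hom C SX A" "copair_x \<cdot> a1 = Id C A" "copair_x \<cdot> a2 = x"
    unfolding copair_x_def by blast+
qed

lemma copair_y: "copair_y \<in> hom C SY A" "copair_y \<cdot> b1 = Id C A" "copair_y \<cdot> b2 = y"
proof -
  have "\<exists>c. c \<in> hom C SY A \<and> c \<cdot> b1 = Id C A \<and> c \<cdot> b2 = y"
    using coproduct2_copair[OF SY id_hom[OF objs(1)] y] by blast
  from someI_ex[OF this] show "copair_y \<in> hom C SY A" "copair_y \<cdot> b1 = Id C A" "copair_y \<cdot> b2 = y"
    unfolding copair_y_def by blast+
qed

declare copair_x(1)[THEN homD, chase] copair_y(1)[THEN homD, chase]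
  copair_x(2,3)[chase] copair_y(2,3)[chase]
  copair_x(2,3)[THEN comp_reassoc_arr, chase] copair_y(2,3)[THEN comp_reassoc_arr, chase]

lemma qx_copair_x: "qx \<cdot> copair_x = qx \<cdot> rX"
  by (rule coproduct2_eq[OF SX comp_hom[OF copair_x(1) qx_hom] comp_hom[OF rX(1) qx_hom]])
    (simp_all add: comp_assoc hom_iff chase)

lemma qy_copair_y: "qy \<cdot> copair_y = qy \<cdot> rY"
  by (rule coproduct2_eq[OF SY comp_hom[OF copair_y(1) qy_hom] comp_hom[OF rY(1) qy_hom]])
    (simp_all add: comp_assoc hom_iff chase)

declare qx_copair_x[chase] qy_copair_y[chase]
  qx_copair_x[THEN comp_reassoc_arr, chase] qy_copair_y[THEN comp_reassoc_arr, chase]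

definition diag_x :: 'a where
  "diag_x = (SOME d. d \<in> hom C A KX \<and> pi1 \<cdot> d = Id C A \<and> pi2 \<cdot> d = Id C A)"
definition diag_y :: 'a where
  "diag_y = (SOME d. d \<in> hom C A KY \<and> rho1 \<cdot> d = Id C A \<and> rho2 \<cdot> d = Id C A)"
definition incl_x :: 'a where
  "incl_x = (SOME w. w \<in> hom C X KX \<and> pi1 \<cdot> w = x \<and> pi2 \<cdot> w = zero_arr X A)"
definition incl_y :: 'a where
  "incl_y = (SOME w. w \<in> hom C Y KY \<and> rho1 \<cdot> w = zero_arr Y A \<and> rho2 \<cdot> w = y)"

lemma diag_x: "diag_x \<in> hom C A KX" "pi1 \<cdot> diag_x = Id C A" "pi2 \<cdot> diag_x = Id C A"
proof -
  have "\<exists>d. d \<in> hom C A KX \<and> pi1 \<cdot> d = Id C A \<and> pi2 \<cdot> d = Id C A"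
    using pullback_lift[OF KPX qx_hom qx_hom id_hom[OF objs(1)] id_hom[OF objs(1)] refl] by blast
  from someI_ex[OF this] show "diag_x \<in> hom C A KX" "pi1 \<cdot> diag_x = Id C A" "pi2 \<cdot> diag_x = Id C A"
    unfolding diag_x_def by blast+
qed

lemma diag_y: "diag_y \<in> hom C A KY" "rho1 \<cdot> diag_y = Id C A" "rho2 \<cdot> diag_y = Id C A"
proof -
  have "\<exists>d. d \<in> hom C A KY \<and> rho1 \<cdot> d = Id C A \<and> rho2 \<cdot> d = Id C A"
    using pullback_lift[OF KPY qy_hom qy_hom id_hom[OF objs(1)] id_hom[OF objs(1)] refl] by blast
  from someI_ex[OF this] show "diag_y \<in> hom C A KY" "rho1 \<cdot> diag_y = Id C A"
    "rho2 \<cdot> diag_y = Id C A"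
    unfolding diag_y_def by blast+
qed

lemma incl_x: "incl_x \<in> hom C X KX" "pi1 \<cdot> incl_x = x" "pi2 \<cdot> incl_x = zero_arr X A"
proof -
  have eq: "qx \<cdot> x = qx \<cdot> zero_arr X A" using qx_x comp_zero_arr_right_hom[OF qx_hom] by simp
  have "\<exists>w. w \<in> hom C X KX \<and> pi1 \<cdot> w = x \<and> pi2 \<cdot> w = zero_arr X A"
    using pullback_lift[OF KPX qx_hom qx_hom x zero_arr_hom[OF objs(2,1)] eq] by blast
  from someI_ex[OF this] show "incl_x \<in> hom C X KX" "pi1 \<cdot> incl_x = x" "pi2 \<cdot> incl_x = zero_arr X A"
    unfolding incl_x_def by blast+
qed

lemma incl_y: "incl_y \<in> hom C Y KY" "rho1 \<cdot> incl_y = zero_arr Y A" "rho2 \<cdot> incl_y = y"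
proof -
  have eq: "qy \<cdot> zero_arr Y A = qy \<cdot> y" using qy_y comp_zero_arr_right_hom[OF qy_hom] by simp
  have "\<exists>w. w \<in> hom C Y KY \<and> rho1 \<cdot> w = zero_arr Y A \<and> rho2 \<cdot> w = y"
    using pullback_lift[OF KPY qy_hom qy_hom zero_arr_hom[OF objs(3,1)] y eq] by blast
  from someI_ex[OF this] show "incl_y \<in> hom C Y KY" "rho1 \<cdot> incl_y = zero_arr Y A"
    "rho2 \<cdot> incl_y = y"
    unfolding incl_y_def by blast+
qed

declare diag_x(1)[THEN homD, chase] diag_y(1)[THEN homD, chase]
  incl_x(1)[THEN homD, chase] incl_y(1)[THEN homD, chase]
  diag_x(2,3)[chase] diag_y(2,3)[chase] incl_x(2,3)[chase] incl_y(2,3)[chase]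
  diag_x(2,3)[THEN comp_reassoc_arr, chase] diag_y(2,3)[THEN comp_reassoc_arr, chase]
  incl_x(2,3)[THEN comp_reassoc_arr, chase] incl_y(2,3)[THEN comp_reassoc_arr, chase]

text \<open>The comparison map \<open>P \<rightarrow> A\<^sub>3\<close> has components \<open>[1,x] \<pi>\<^sub>1, [1,0] \<pi>\<^sub>1, [1,y] \<pi>\<^sub>2\<close>; composed with
  \<open>g\<close> it sends \<open>A, X, Y\<close> to the diagonal, \<open>(x,0,0)\<close> and \<open>(0,0,y)\<close>.\<close>
definition comparison_P :: 'a where
  "comparison_P = (SOME t. t \<in> hom C P L \<and>
     l1 \<cdot> t = copair_x \<cdot> q1 \<and> l2 \<cdot> t = rX \<cdot> q1 \<and> l3 \<cdot> t = copair_y \<cdot> q2)"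

definition comparison :: 'a where "comparison = comparison_P \<cdot> g"

lemma comparison_P: "comparison_P \<in> hom C P L" "l1 \<cdot> comparison_P = copair_x \<cdot> q1"
    "l2 \<cdot> comparison_P = rX \<cdot> q1" "l3 \<cdot> comparison_P = copair_y \<cdot> q2"
proof -
  have "qx \<cdot> (copair_x \<cdot> q1) = qx \<cdot> (rX \<cdot> q1)" "qy \<cdot> (rX \<cdot> q1) = qy \<cdot> (copair_y \<cdot> q2)"
    by (simp_all add: comp_assoc hom_iff chase)
  then have "\<exists>t. t \<in> hom C P L \<and> l1 \<cdot> t = copair_x \<cdot> q1 \<and> l2 \<cdot> t = rX \<cdot> q1 \<and> l3 \<cdot> t = copair_y \<cdot> q2"
    using zigzag_lift[OF A3 qx_hom comp_hom[OF pb_P(1) copair_x(1)] comp_hom[OF pb_P(1) rX(1)]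
        comp_hom[OF pb_P(2) copair_y(1)]] by blast
  from someI_ex[OF this] show "comparison_P \<in> hom C P L" "l1 \<cdot> comparison_P = copair_x \<cdot> q1"
    "l2 \<cdot> comparison_P = rX \<cdot> q1" "l3 \<cdot> comparison_P = copair_y \<cdot> q2"
    unfolding comparison_P_def by blast+
qed

lemma comparison_hom: "comparison \<in> hom C S L"
  unfolding comparison_def using g(1) comparison_P(1) by blast

declare comparison_P(1)[THEN homD, chase] comparison_P(2-4)[chase]
  comparison_P(2-4)[THEN comp_reassoc_arr, chase] comparison_hom[THEN homD, chase]

lemma comparison_inj1: "comparison \<cdot> i1 = dX \<cdot> diag_x"
  unfolding comparison_def
  by (rule zigzag_eq[OF A3 qx_hom qy_hom, where W=A]) (simp_all add: comp_assoc hom_iff chase)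

lemma comparison_inj1': "comparison \<cdot> i1 = dY \<cdot> diag_y"
  unfolding comparison_def
  by (rule zigzag_eq[OF A3 qx_hom qy_hom, where W=A]) (simp_all add: comp_assoc hom_iff chase)

lemma comparison_inj2: "comparison \<cdot> i2 = dX \<cdot> incl_x"
  unfolding comparison_def
  by (rule zigzag_eq[OF A3 qx_hom qy_hom, where W=X]) (simp_all add: comp_assoc hom_iff chase)

lemma comparison_inj3: "comparison \<cdot> i3 = dY \<cdot> incl_y"
  unfolding comparison_def
  by (rule zigzag_eq[OF A3 qx_hom qy_hom, where W=Y]) (simp_all add: comp_assoc hom_iff chase)

definition proj_y :: 'a where
  "proj_y = (SOME t. t \<in> hom C L KY \<and> rho1 \<cdot> t = l2 \<and> rho2 \<cdot> t = l3)"

lemma proj_y: "proj_y \<in> hom C L KY" "rho1 \<cdot> proj_y = l2" "rho2 \<cdot> proj_y = l3"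
proof -
  have "\<exists>t. t \<in> hom C L KY \<and> rho1 \<cdot> t = l2 \<and> rho2 \<cdot> t = l3"
    using pullback_lift[OF KPY qy_hom qy_hom zigzag(2,3,5)] by blast
  from someI_ex[OF this] show "proj_y \<in> hom C L KY" "rho1 \<cdot> proj_y = l2" "rho2 \<cdot> proj_y = l3"
    unfolding proj_y_def by blast+
qed

declare proj_y(1)[THEN homD, chase] proj_y(2,3)[chase] proj_y(2,3)[THEN comp_reassoc_arr, chase]

lemma proj_y_dY: "proj_y \<cdot> dY = Id C KY"
  by (rule pullback_eq[OF KPY, where W=KY]) (simp_all add: comp_assoc hom_iff chase)

lemma kernel_proj_y:
  assumes j: "is_kernel C j proj_y"
  shows "j \<in> hom C (Dom C j) L" "l2 \<cdot> j = zero_arr (Dom C j) A" "l3 \<cdot> j = zero_arr (Dom C j) A"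
proof -
  note jh = kernel_homs[OF j proj_y(1)]
  show "j \<in> hom C (Dom C j) L" by (rule jh(1))
  have "Dom C j \<in> Obj C" using jh(1) homD by blast
  then show "l2 \<cdot> j = zero_arr (Dom C j) A" "l3 \<cdot> j = zero_arr (Dom C j) A"
    using comp_reassoc[OF proj_y(2) jh(1) proj_y(1) kernel_pair_y(1)]
      comp_reassoc[OF proj_y(3) jh(1) proj_y(1) kernel_pair_y(2)] jh(2)
      comp_zero_arr_right_hom[OF kernel_pair_y(1)] comp_zero_arr_right_hom[OF kernel_pair_y(2)]
    by simp_all
qed

lemma kernel_proj_y_factors_dX:
  assumes j: "is_kernel C j proj_y"
  obtains w where "w \<in> hom C (Dom C j) KX" "dX \<cdot> w = j"
proof -
  note jh = kernel_proj_y[OF j]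
  have "qx \<cdot> (l1 \<cdot> j) = qx \<cdot> (l2 \<cdot> j)"
    using comp_reassoc[OF zigzag(4) jh(1) zigzag(1) qx_hom]
      comp_assoc_hom[OF jh(1) zigzag(2) qx_hom] by simp
  from pullback_lift[OF KPX qx_hom qx_hom comp_hom[OF jh(1) zigzag(1)] comp_hom[OF jh(1) zigzag(2)]
      this]
  obtain w where w: "w \<in> hom C (Dom C j) KX" "pi1 \<cdot> w = l1 \<cdot> j" "pi2 \<cdot> w = l2 \<cdot> j" .
  have "dX \<cdot> w = j"
    by (rule zigzag_eq[OF A3 qx_hom qy_hom, where W="Dom C j"])
      (use w jh in \<open>simp_all add: comp_assoc hom_iff chase\<close>)
  with w(1) show ?thesis by (rule that)
qed

subsection \<open>Pregroupoid structures\<close>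

definition is_pregroupoid :: "'a \<Rightarrow> bool" where
  "is_pregroupoid p \<longleftrightarrow> p \<in> hom C L A \<and> p \<cdot> dX = pi1 \<and> p \<cdot> dY = rho2"

lemma pregroupoid_unique:
  assumes "is_pregroupoid p" "is_pregroupoid p'"
  shows "p = p'"
proof -
  have p: "p \<in> hom C L A" "p' \<in> hom C L A" "p \<cdot> dX = p' \<cdot> dX" "p \<cdot> dY = p' \<cdot> dY"
    using assms unfolding is_pregroupoid_def by simp_all
  obtain j where j: "is_kernel C j proj_y" using kernel_exists[OF proj_y(1)] .
  obtain w where w: "w \<in> hom C (Dom C j) KX" "dX \<cdot> w = j" using kernel_proj_y_factors_dX[OF j] .
  show ?thesis
  proof (rule split_ext_jointly_epi[OF j proj_y(1) kernel_proj_y(1)[OF j] dY(1) proj_y_dY p(1,2)])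
    show "p \<cdot> j = p' \<cdot> j"
      using comp_reassoc[OF p(3) w(1) dX(1) p(1)] comp_reassoc[OF refl w(1) dX(1) p(2)] w(2) by simp
  qed (rule p(4))
qed

lemma pregroupoid_comp_comparison:
  assumes "is_pregroupoid p"
  shows "p \<cdot> comparison = h"
proof -
  have p: "p \<in> hom C L A" "p \<cdot> dX = pi1" "p \<cdot> dY = rho2"
    using assms unfolding is_pregroupoid_def by simp_all
  show ?thesis
  proof (rule coproduct3_eq[OF S comp_hom[OF comparison_hom p(1)] h(1)])
    show "(p \<cdot> comparison) \<cdot> i1 = h \<cdot> i1"
      using comp_assoc_hom[OF injections(1) comparison_hom p(1)] comparison_inj1
        comp_reassoc[OF p(2) diag_x(1) dX(1) p(1)] diag_x(2) h(2) by simp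
    show "(p \<cdot> comparison) \<cdot> i2 = h \<cdot> i2"
      using comp_assoc_hom[OF injections(2) comparison_hom p(1)] comparison_inj2
        comp_reassoc[OF p(2) incl_x(1) dX(1) p(1)] incl_x(2) h(3) by simp
    show "(p \<cdot> comparison) \<cdot> i3 = h \<cdot> i3"
      using comp_assoc_hom[OF injections(3) comparison_hom p(1)] comparison_inj3
        comp_reassoc[OF p(3) incl_y(1) dY(1) p(1)] incl_y(3) h(4) by simp
  qed
qed

lemma pregroupoid_imp_commutator_zero:
  assumes "is_pregroupoid p"
  shows "h \<cdot> k = zero_arr K A"
proof -
  have p: "p \<in> hom C L A" using assms unfolding is_pregroupoid_def by simp
  have "h \<cdot> k = p \<cdot> (comparison_P \<cdot> (g \<cdot> k))"
    using pregroupoid_comp_comparison[OF assms] comparison_def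
      comp_assoc_hom[OF k_hom comparison_hom p] comp_assoc_hom[OF k_hom g(1) comparison_P(1)]
    by simp
  then show ?thesis
    using g_k comp_zero_arr_right_hom[OF comparison_P(1)] comp_zero_arr_right_hom[OF p] by simp
qed

subsection \<open>From a trivial commutator to a pregroupoid structure\<close>

definition sec_q2 :: 'a where
  "sec_q2 = (SOME t. t \<in> hom C SY P \<and> q1 \<cdot> t = a1 \<cdot> rY \<and> q2 \<cdot> t = Id C SY)"
definition inj_SX :: 'a where
  "inj_SX = (SOME t. t \<in> hom C SX S \<and> t \<cdot> a1 = i1 \<and> t \<cdot> a2 = i2)"
definition inj_SY :: 'a where
  "inj_SY = (SOME t. t \<in> hom C SY S \<and> t \<cdot> b1 = i1 \<and> t \<cdot> b2 = i3)"

lemma sec_q2: "sec_q2 \<in> hom C SY P" "q1 \<cdot> sec_q2 = a1 \<cdot> rY" "q2 \<cdot> sec_q2 = Id C SY"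
proof -
  have "rX \<cdot> (a1 \<cdot> rY) = rY \<cdot> Id C SY"
    using comp_reassoc[OF rX(2) rY(1) injections(4) rX(1)] comp_id_left_hom[OF rY(1)]
      comp_id_right_hom[OF rY(1)] by simp
  from pullback_lift[OF PB rX(1) rY(1) comp_hom[OF rY(1) injections(4)] id_hom[OF objs(11)] this]
  have "\<exists>t. t \<in> hom C SY P \<and> q1 \<cdot> t = a1 \<cdot> rY \<and> q2 \<cdot> t = Id C SY" by blast
  from someI_ex[OF this] show "sec_q2 \<in> hom C SY P" "q1 \<cdot> sec_q2 = a1 \<cdot> rY" "q2 \<cdot> sec_q2 = Id C SY"
    unfolding sec_q2_def by blast+
qed

lemma inj_SX: "inj_SX \<in> hom C SX S" "inj_SX \<cdot> a1 = i1" "inj_SX \<cdot> a2 = i2"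
proof -
  have "\<exists>t. t \<in> hom C SX S \<and> t \<cdot> a1 = i1 \<and> t \<cdot> a2 = i2"
    using coproduct2_copair[OF SX injections(1,2)] by blast
  from someI_ex[OF this] show "inj_SX \<in> hom C SX S" "inj_SX \<cdot> a1 = i1" "inj_SX \<cdot> a2 = i2"
    unfolding inj_SX_def by blast+
qed

lemma inj_SY: "inj_SY \<in> hom C SY S" "inj_SY \<cdot> b1 = i1" "inj_SY \<cdot> b2 = i3"
proof -
  have "\<exists>t. t \<in> hom C SY S \<and> t \<cdot> b1 = i1 \<and> t \<cdot> b2 = i3"
    using coproduct2_copair[OF SY injections(1,3)] by blast
  from someI_ex[OF this] show "inj_SY \<in> hom C SY S" "inj_SY \<cdot> b1 = i1" "inj_SY \<cdot> b2 = i3"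
    unfolding inj_SY_def by blast+
qed

declare sec_q2(1)[THEN homD, chase] inj_SX(1)[THEN homD, chase] inj_SY(1)[THEN homD, chase]
  sec_q2(2,3)[chase] inj_SX(2,3)[chase] inj_SY(2,3)[chase]
  sec_q2(2,3)[THEN comp_reassoc_arr, chase] inj_SX(2,3)[THEN comp_reassoc_arr, chase]
  inj_SY(2,3)[THEN comp_reassoc_arr, chase]

lemma h_inj_SX: "h \<cdot> inj_SX = copair_x"
  by (rule coproduct2_eq[OF SX]) (simp_all add: comp_assoc hom_iff chase)

lemma h_inj_SY: "h \<cdot> inj_SY = copair_y"
  by (rule coproduct2_eq[OF SY]) (simp_all add: comp_assoc hom_iff chase)

lemma fX_inj_SX: "fX \<cdot> inj_SX = Id C SX"
  by (rule coproduct2_eq[OF SX]) (simp_all add: comp_assoc hom_iff chase)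

lemma fY_inj_SX: "fY \<cdot> inj_SX = b1 \<cdot> rX"
  by (rule coproduct2_eq[OF SX]) (simp_all add: comp_assoc hom_iff chase)

lemma fX_inj_SY: "fX \<cdot> inj_SY = a1 \<cdot> rY"
  by (rule coproduct2_eq[OF SY]) (simp_all add: comp_assoc hom_iff chase)

lemma fY_inj_SY: "fY \<cdot> inj_SY = Id C SY"
  by (rule coproduct2_eq[OF SY]) (simp_all add: comp_assoc hom_iff chase)

declare h_inj_SX[chase] h_inj_SY[chase] fX_inj_SX[chase] fY_inj_SX[chase] fX_inj_SY[chase]
  fY_inj_SY[chase]
  h_inj_SX[THEN comp_reassoc_arr, chase] h_inj_SY[THEN comp_reassoc_arr, chase]
  fX_inj_SX[THEN comp_reassoc_arr, chase] fY_inj_SX[THEN comp_reassoc_arr, chase]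
  fX_inj_SY[THEN comp_reassoc_arr, chase] fY_inj_SY[THEN comp_reassoc_arr, chase]

lemma g_inj_SY: "g \<cdot> inj_SY = sec_q2"
  by (rule pullback_eq[OF PB]) (simp_all add: comp_assoc hom_iff chase)

lemma g_inj_SX:
  assumes z: "z \<in> hom C W P" "q2 \<cdot> z = zero_arr W SY"
  shows "g \<cdot> (inj_SX \<cdot> (q1 \<cdot> z)) = z"
proof -
  have oW: "W \<in> Obj C" using z homD by blast
  have rX_z: "rX \<cdot> (q1 \<cdot> z) = zero_arr W A"
    using comp_reassoc[OF pb_P(3) z(1) pb_P(1) rX(1)] comp_assoc_hom[OF z(1) pb_P(2) rY(1)] z(2)
      comp_zero_arr_right_hom[OF rY(1) oW] by simp
  show ?thesis
    by (rule pullback_eq[OF PB]) (use z oW rX_z in \<open>simp_all add: comp_assoc hom_iff chase\<close>)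
qed

text \<open>\<open>P\<close> is a split extension of \<open>A + Y\<close> by the kernel of \<open>q\<^sub>2\<close>, and both the kernel and the
  section lie in the image of \<open>g\<close>.\<close>
lemma g_full_image: "full_image g"
proof (rule full_imageI)
  fix M m e assume m: "m \<in> hom C M (Cod C g)" "mono C m" and e: "e \<in> hom C (Dom C g) M" "m \<cdot> e = g"
  have m': "m \<in> hom C M P" and e': "e \<in> hom C S M" using m e g(1) by (simp_all add: hom_iff)
  obtain j where j: "is_kernel C j q2" using kernel_exists[OF pb_P(2)] .
  note jh = kernel_homs[OF j pb_P(2)]
  have jm: "e \<cdot> (inj_SX \<cdot> (q1 \<cdot> j)) \<in> hom C (Dom C j) M"
    using jh(1) pb_P(1) inj_SX(1) e' by blast
  have "m \<cdot> (e \<cdot> (inj_SX \<cdot> (q1 \<cdot> j))) = j"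
    using g_inj_SX[OF jh]
      comp_reassoc[OF e(2) comp_hom[OF comp_hom[OF jh(1) pb_P(1)] inj_SX(1)] e' m'] by simp
  moreover have "m \<cdot> (e \<cdot> inj_SY) = sec_q2"
    using g_inj_SY comp_reassoc[OF e(2) inj_SY(1) e' m'] by simp
  ultimately show "iso C m"
    using split_ext_mono_iso[OF j pb_P(2) jh(1) sec_q2(1,3) m(2) m' jm _ comp_hom[OF inj_SY(1) e']]
    by simp
qed

lemma commutator_zero_factors_through_g:
  assumes "h \<cdot> k = zero_arr K A"
  obtains \<phi> where "\<phi> \<in> hom C P A" "\<phi> \<cdot> g = h"
  using full_image_cokernel_desc[OF g(1) g_full_image k k_hom h(1) assms] .

lemma kernel_comparison_P:
  assumes "is_kernel C j comparison_P"
  shows "j \<in> hom C (Dom C j) P" "copair_x \<cdot> (q1 \<cdot> j) = zero_arr (Dom C j) A"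
    "rX \<cdot> (q1 \<cdot> j) = zero_arr (Dom C j) A" "copair_y \<cdot> (q2 \<cdot> j) = zero_arr (Dom C j) A"
proof -
  note jh = kernel_homs[OF assms comparison_P(1)]
  have oJ: "Dom C j \<in> Obj C" using jh(1) homD by blast
  show "j \<in> hom C (Dom C j) P" by (rule jh(1))
  show "copair_x \<cdot> (q1 \<cdot> j) = zero_arr (Dom C j) A" "rX \<cdot> (q1 \<cdot> j) = zero_arr (Dom C j) A"
    "copair_y \<cdot> (q2 \<cdot> j) = zero_arr (Dom C j) A"
    using jh(2) comp_zero_arr_right_hom[OF zigzag(1) oJ] comp_zero_arr_right_hom[OF zigzag(2) oJ]
      comp_zero_arr_right_hom[OF zigzag(3) oJ]
      comp_reassoc[OF comparison_P(2) jh(1) comparison_P(1) zigzag(1)]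
      comp_reassoc[OF comparison_P(3) jh(1) comparison_P(1) zigzag(2)]
      comp_reassoc[OF comparison_P(4) jh(1) comparison_P(1) zigzag(3)]
      comp_assoc_hom[OF jh(1) pb_P(1) copair_x(1)] comp_assoc_hom[OF jh(1) pb_P(1) rX(1)]
      comp_assoc_hom[OF jh(1) pb_P(2) copair_y(1)]
    by simp_all
qed

lemma kernel_comparison_P_split:
  assumes j: "is_kernel C j comparison_P"
  obtains v r s where "is_kernel C v (comparison_P \<cdot> sec_q2)"
    "r \<in> hom C (Dom C j) (Dom C v)" "v \<cdot> r = q2 \<cdot> j"
    "s \<in> hom C (Dom C v) (Dom C j)" "j \<cdot> s = sec_q2 \<cdot> v" "r \<cdot> s = Id C (Dom C v)"
proof -
  define J where "J = Dom C j"
  note jh = kernel_comparison_P[OF j, folded J_def]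
  have oJ: "J \<in> Obj C" using jh(1) homD by blast
  have \<sigma>: "comparison_P \<cdot> sec_q2 \<in> hom C SY L" using sec_q2(1) comparison_P(1) by blast
  obtain v where v: "is_kernel C v (comparison_P \<cdot> sec_q2)" using kernel_exists[OF \<sigma>] .
  define V where "V = Dom C v"
  note vh = kernel_homs[OF v \<sigma>, folded V_def]
  have oV: "V \<in> Obj C" using vh(1) homD by blast
  have "(comparison_P \<cdot> sec_q2) \<cdot> (q2 \<cdot> j) = zero_arr J L"
    by (rule zigzag_eq[OF A3 qx_hom qy_hom, where W=J])
      (use jh oJ in \<open>simp_all add: comp_assoc hom_iff chase\<close>)
  from kernel_lift[OF v \<sigma> comp_hom[OF jh(1) pb_P(2)] this]
  obtain r where r: "r \<in> hom C J V" "v \<cdot> r = q2 \<cdot> j" unfolding V_def .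
  have "comparison_P \<cdot> (sec_q2 \<cdot> v) = zero_arr V L"
    using vh(2) comp_assoc_hom[OF vh(1) sec_q2(1) comparison_P(1)] by simp
  from kernel_lift[OF j comparison_P(1) comp_hom[OF vh(1) sec_q2(1)] this]
  obtain s where s: "s \<in> hom C V J" "j \<cdot> s = sec_q2 \<cdot> v" unfolding J_def .
  have "v \<cdot> (r \<cdot> s) = v \<cdot> Id C V"
    using comp_reassoc[OF r(2) s(1) r(1) vh(1)] comp_assoc_hom[OF s(1) jh(1) pb_P(2)] s(2)
      comp_reassoc[OF sec_q2(3) vh(1) sec_q2(1) pb_P(2)] comp_id_left_hom[OF vh(1)]
      comp_id_right_hom[OF vh(1)] by simp
  then have "r \<cdot> s = Id C V"
    using kernel_eq[OF v] comp_hom[OF s(1) r(1)] id_hom[OF oV] V_def by simp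
  with v r s show ?thesis unfolding J_def V_def by (rule that)
qed

context
  fixes \<phi> assumes \<phi>: "\<phi> \<in> hom C P A" "\<phi> \<cdot> g = h"
begin

lemma factor_on_kernel_q2:
  assumes z: "z \<in> hom C W P" "q2 \<cdot> z = zero_arr W SY"
  shows "\<phi> \<cdot> z = copair_x \<cdot> (q1 \<cdot> z)"
proof -
  have "\<phi> \<cdot> z = h \<cdot> (inj_SX \<cdot> (q1 \<cdot> z))"
    using g_inj_SX[OF z]
      comp_reassoc[OF \<phi>(2) comp_hom[OF comp_hom[OF z(1) pb_P(1)] inj_SX(1)] g(1) \<phi>(1)]
    by simp
  then show ?thesis
    using comp_reassoc[OF h_inj_SX comp_hom[OF z(1) pb_P(1)] inj_SX(1) h(1)] by simp
qed

lemma factor_sec_q2: "\<phi> \<cdot> sec_q2 = copair_y"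
  using g_inj_SY comp_reassoc[OF \<phi>(2) inj_SY(1) g(1) \<phi>(1)] h_inj_SY by simp

text \<open>On the kernel of the splitting of \<open>kernel_comparison_P_split\<close> the factorisation of \<open>h\<close> is
  computed by \<open>[1,x]\<close>, on its section by \<open>[1,y]\<close>; both vanish there.\<close>
lemma factor_kills_kernel_comparison_P:
  assumes j: "is_kernel C j comparison_P"
  shows "\<phi> \<cdot> j = zero_arr (Dom C j) A"
proof -
  obtain v r s where v: "is_kernel C v (comparison_P \<cdot> sec_q2)"
    and r: "r \<in> hom C (Dom C j) (Dom C v)" "v \<cdot> r = q2 \<cdot> j"
    and s: "s \<in> hom C (Dom C v) (Dom C j)" "j \<cdot> s = sec_q2 \<cdot> v" and rs: "r \<cdot> s = Id C (Dom C v)"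
    using kernel_comparison_P_split[OF j] .
  note jh = kernel_comparison_P[OF j]
  note vh = kernel_homs[OF v comp_hom[OF sec_q2(1) comparison_P(1)]]
  have oJ: "Dom C j \<in> Obj C" and oV: "Dom C v \<in> Obj C" using jh(1) vh(1) homD by blast+
  obtain u where u: "is_kernel C u r" using kernel_exists[OF r(1)] .
  note uh = kernel_homs[OF u r(1)]
  have oU: "Dom C u \<in> Obj C" using uh(1) homD by blast
  have "q2 \<cdot> (j \<cdot> u) = zero_arr (Dom C u) SY"
    using comp_reassoc[OF r(2) uh(1) r(1) vh(1)] comp_assoc_hom[OF uh(1) jh(1) pb_P(2)]
      uh(2) comp_zero_arr_right_hom[OF vh(1) oU] by simp
  from factor_on_kernel_q2[OF comp_hom[OF uh(1) jh(1)] this]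
  have "\<phi> \<cdot> (j \<cdot> u) = zero_arr (Dom C u) A"
    using comp_reassoc[OF jh(2) uh(1) comp_hom[OF jh(1) pb_P(1)] copair_x(1)]
      comp_assoc_hom[OF uh(1) jh(1) pb_P(1)] comp_zero_arr_left_hom[OF uh(1)] by simp
  moreover have "\<phi> \<cdot> (j \<cdot> s) = zero_arr (Dom C v) A"
  proof -
    have "copair_y \<cdot> v = l3 \<cdot> ((comparison_P \<cdot> sec_q2) \<cdot> v)"
      using vh(1) by (simp add: comp_assoc hom_iff chase)
    then show ?thesis
      using s(2) comp_reassoc[OF factor_sec_q2 vh(1) sec_q2(1) \<phi>(1)] vh(2)
        comp_zero_arr_right_hom[OF zigzag(3) oV] by simp
  qed
  ultimately show ?thesis
    using split_ext_jointly_epi[OF u r(1) uh(1) s(1) rs comp_hom[OF jh(1) \<phi>(1)]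
        zero_arr_hom[OF oJ objs(1)]]
      comp_assoc_hom[OF uh(1) jh(1) \<phi>(1)] comp_assoc_hom[OF s(1) jh(1) \<phi>(1)]
      comp_zero_arr_left_hom[OF uh(1)] comp_zero_arr_left_hom[OF s(1)] by simp
qed

end

definition emb_x :: 'a where
  "emb_x = (SOME t. t \<in> hom C X' L \<and> l1 \<cdot> t = mx \<and> l2 \<cdot> t = zero_arr X' A \<and> l3 \<cdot> t = zero_arr X' A)"
definition emb_y :: 'a where
  "emb_y = (SOME t. t \<in> hom C Y' L \<and> l1 \<cdot> t = zero_arr Y' A \<and> l2 \<cdot> t = zero_arr Y' A \<and> l3 \<cdot> t = my)"

lemma emb_x: "emb_x \<in> hom C X' L" "l1 \<cdot> emb_x = mx" "l2 \<cdot> emb_x = zero_arr X' A"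
    "l3 \<cdot> emb_x = zero_arr X' A"
proof -
  have "qx \<cdot> mx = qx \<cdot> zero_arr X' A" "qy \<cdot> zero_arr X' A = qy \<cdot> zero_arr X' A"
    using qx_mx comp_zero_arr_right_hom[OF qx_hom objs(13)] by simp_all
  from zigzag_lift[OF A3 qx_hom image_x(4) zero_arr_hom[OF objs(13,1)] zero_arr_hom[OF objs(13,1)]
      this]
  have "\<exists>t. t \<in> hom C X' L \<and> l1 \<cdot> t = mx \<and> l2 \<cdot> t = zero_arr X' A \<and> l3 \<cdot> t = zero_arr X' A"
    by blast
  from someI_ex[OF this] show "emb_x \<in> hom C X' L" "l1 \<cdot> emb_x = mx" "l2 \<cdot> emb_x = zero_arr X' A"
    "l3 \<cdot> emb_x = zero_arr X' A"
    unfolding emb_x_def by blast+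
qed

lemma emb_y: "emb_y \<in> hom C Y' L" "l1 \<cdot> emb_y = zero_arr Y' A" "l2 \<cdot> emb_y = zero_arr Y' A"
    "l3 \<cdot> emb_y = my"
proof -
  have "qx \<cdot> zero_arr Y' A = qx \<cdot> zero_arr Y' A" "qy \<cdot> zero_arr Y' A = qy \<cdot> my"
    using qy_my comp_zero_arr_right_hom[OF qy_hom objs(14)] by simp_all
  from zigzag_lift[OF A3 qx_hom zero_arr_hom[OF objs(14,1)] zero_arr_hom[OF objs(14,1)] image_y(4)
      this]
  have "\<exists>t. t \<in> hom C Y' L \<and> l1 \<cdot> t = zero_arr Y' A \<and> l2 \<cdot> t = zero_arr Y' A \<and> l3 \<cdot> t = my"
    by blast
  from someI_ex[OF this] show "emb_y \<in> hom C Y' L" "l1 \<cdot> emb_y = zero_arr Y' A"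
    "l2 \<cdot> emb_y = zero_arr Y' A" "l3 \<cdot> emb_y = my"
    unfolding emb_y_def by blast+
qed

declare emb_x(1)[THEN homD, chase] emb_y(1)[THEN homD, chase] emb_x(2-4)[chase] emb_y(2-4)[chase]
  emb_x(2-4)[THEN comp_reassoc_arr, chase] emb_y(2-4)[THEN comp_reassoc_arr, chase]

lemma emb_x_image: "emb_x \<cdot> ex = comparison \<cdot> i2"
  unfolding comparison_def
  by (rule zigzag_eq[OF A3 qx_hom qy_hom, where W=X]) (simp_all add: comp_assoc hom_iff chase)

lemma emb_y_image: "emb_y \<cdot> ey = comparison \<cdot> i3"
  unfolding comparison_def
  by (rule zigzag_eq[OF A3 qx_hom qy_hom, where W=Y]) (simp_all add: comp_assoc hom_iff chase)

lemma kernel_pi2_factors_emb_x: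
  assumes j: "is_kernel C j pi2"
  obtains t where "t \<in> hom C (Dom C j) X'" "dX \<cdot> j = emb_x \<cdot> t"
proof -
  note jh = kernel_homs[OF j kernel_pair_x(2)]
  have oJ: "Dom C j \<in> Obj C" using jh(1) homD by blast
  have "qx \<cdot> (pi1 \<cdot> j) = zero_arr (Dom C j) QX"
    using comp_reassoc[OF kernel_pair_x(3) jh(1) kernel_pair_x(1) qx_hom]
      comp_assoc_hom[OF jh(1) kernel_pair_x(2) qx_hom] jh(2) comp_zero_arr_right_hom[OF qx_hom oJ]
    by simp
  from kernel_lift[OF mx_kernel qx_hom comp_hom[OF jh(1) kernel_pair_x(1)] this]
  obtain t where t: "t \<in> hom C (Dom C j) X'" "mx \<cdot> t = pi1 \<cdot> j" unfolding X'_def .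
  have "dX \<cdot> j = emb_x \<cdot> t"
    by (rule zigzag_eq[OF A3 qx_hom qy_hom, where W="Dom C j"])
      (use jh t oJ in \<open>simp_all add: comp_assoc hom_iff chase\<close>)
  with t(1) show ?thesis by (rule that)
qed

lemma kernel_rho1_factors_emb_y:
  assumes j: "is_kernel C j rho1"
  obtains t where "t \<in> hom C (Dom C j) Y'" "dY \<cdot> j = emb_y \<cdot> t"
proof -
  note jh = kernel_homs[OF j kernel_pair_y(1)]
  have oJ: "Dom C j \<in> Obj C" using jh(1) homD by blast
  have "qy \<cdot> (rho2 \<cdot> j) = zero_arr (Dom C j) QY"
    using comp_reassoc[OF kernel_pair_y(3) jh(1) kernel_pair_y(1) qy_hom]
      comp_assoc_hom[OF jh(1) kernel_pair_y(2) qy_hom] jh(2) comp_zero_arr_right_hom[OF qy_hom oJ]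
    by simp
  from kernel_lift[OF my_kernel qy_hom comp_hom[OF jh(1) kernel_pair_y(2)] this]
  obtain t where t: "t \<in> hom C (Dom C j) Y'" "my \<cdot> t = rho2 \<cdot> j" unfolding Y'_def .
  have "dY \<cdot> j = emb_y \<cdot> t"
    by (rule zigzag_eq[OF A3 qx_hom qy_hom, where W="Dom C j"])
      (use jh t oJ in \<open>simp_all add: comp_assoc hom_iff chase\<close>)
  with t(1) show ?thesis by (rule that)
qed

lemma kernel_proj_y_factors_emb_x:
  assumes j: "is_kernel C j proj_y"
  obtains t where "t \<in> hom C (Dom C j) X'" "emb_x \<cdot> t = j"
proof -
  note jh = kernel_proj_y[OF j]
  have oJ: "Dom C j \<in> Obj C" using jh(1) homD by blast
  have "qx \<cdot> (l1 \<cdot> j) = zero_arr (Dom C j) QX"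
    using comp_reassoc[OF zigzag(4) jh(1) zigzag(1) qx_hom]
      comp_assoc_hom[OF jh(1) zigzag(2) qx_hom] jh(2)
      comp_zero_arr_right_hom[OF qx_hom oJ] by simp
  from kernel_lift[OF mx_kernel qx_hom comp_hom[OF jh(1) zigzag(1)] this]
  obtain t where t: "t \<in> hom C (Dom C j) X'" "mx \<cdot> t = l1 \<cdot> j" unfolding X'_def .
  have "emb_x \<cdot> t = j"
    by (rule zigzag_eq[OF A3 qx_hom qy_hom, where W="Dom C j"])
      (use jh t oJ in \<open>simp_all add: comp_assoc hom_iff chase\<close>)
  with t(1) show ?thesis by (rule that)
qed

text \<open>\<open>A\<^sub>3\<close> is a split extension of \<open>A \<times>\<^sub>A\<^sub>/\<^sub>Y A\<close> (section \<open>dY\<close>) whose kernel lies in the image of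
  \<open>X'\<close>, and \<open>A \<times>\<^sub>A\<^sub>/\<^sub>Y A\<close> is a split extension of \<open>A\<close> whose kernel lies in the image of \<open>Y'\<close>;
  the images of \<open>A, X', Y'\<close> all lie in the image of the comparison.\<close>
lemma comparison_full_image: "full_image comparison"
proof (rule full_imageI)
  fix M m e
  assume m: "m \<in> hom C M (Cod C comparison)" "mono C m" and e: "regular_epi C e"
    "e \<in> hom C (Dom C comparison) M" "m \<cdot> e = comparison"
  have m': "m \<in> hom C M L" and e': "e \<in> hom C S M"
    using m e comparison_hom by (simp_all add: hom_iff)
  have me: "m \<cdot> (e \<cdot> i) = comparison \<cdot> i" if "i \<in> hom C Z S" for i Z
    using comp_reassoc[OF e(3) that e' m'] .
  obtain d1 where d1: "d1 \<in> hom C X' M" "m \<cdot> d1 = emb_x"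
    using regular_epi_mono_diagonal[OF image_x(1,3) m' m(2) comp_hom[OF injections(2) e'] emb_x(1)]
      me[OF injections(2)] emb_x_image by metis
  obtain d3 where d3: "d3 \<in> hom C Y' M" "m \<cdot> d3 = emb_y"
    using regular_epi_mono_diagonal[OF image_y(1,3) m' m(2) comp_hom[OF injections(3) e'] emb_y(1)]
      me[OF injections(3)] emb_y_image by metis
  obtain jy where jy: "is_kernel C jy rho1" using kernel_exists[OF kernel_pair_y(1)] .
  note jyh = kernel_homs[OF jy kernel_pair_y(1)]
  obtain ty where ty: "ty \<in> hom C (Dom C jy) Y'" "dY \<cdot> jy = emb_y \<cdot> ty"
    using kernel_rho1_factors_emb_y[OF jy] .
  obtain dd where dd: "dd \<in> hom C KY M" "m \<cdot> dd = dY"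
  proof (rule split_ext_factor_through_mono[OF jy kernel_pair_y(1) jyh(1) diag_y(1,2) dY(1) m' m(2)
        comp_hom[OF injections(1) e'] _ comp_hom[OF ty(1) d3(1)]])
    show "dY \<cdot> diag_y = m \<cdot> (e \<cdot> i1)" using me[OF injections(1)] comparison_inj1' by simp
    show "dY \<cdot> jy = m \<cdot> (d3 \<cdot> ty)" using ty(2) comp_reassoc[OF d3(2) ty(1) d3(1) m'] by simp
  qed
  obtain j where j: "is_kernel C j proj_y" using kernel_exists[OF proj_y(1)] .
  obtain t where t: "t \<in> hom C (Dom C j) X'" "emb_x \<cdot> t = j"
    using kernel_proj_y_factors_emb_x[OF j] .
  show "iso C m"
  proof (rule split_ext_mono_iso[OF j proj_y(1) kernel_proj_y(1)[OF j] dY(1) proj_y_dY m(2) m'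
        comp_hom[OF t(1) d1(1)] _ dd])
    show "m \<cdot> (d1 \<cdot> t) = j" using t(2) comp_reassoc[OF d1(2) t(1) d1(1) m'] by simp
  qed
qed

lemma commutator_zero_kills_kernel_comparison:
  assumes hk: "h \<cdot> k = zero_arr K A" and j: "is_kernel C j comparison"
  shows "h \<cdot> j = zero_arr (Dom C j) A"
proof -
  obtain \<phi> where \<phi>: "\<phi> \<in> hom C P A" "\<phi> \<cdot> g = h" using commutator_zero_factors_through_g[OF hk] .
  note jh = kernel_homs[OF j comparison_hom]
  obtain j' where j': "is_kernel C j' comparison_P" using kernel_exists[OF comparison_P(1)] .
  have "comparison_P \<cdot> (g \<cdot> j) = zero_arr (Dom C j) L"
    using jh(2) comparison_def comp_assoc_hom[OF jh(1) g(1) comparison_P(1)] by simp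
  from kernel_lift[OF j' comparison_P(1) comp_hom[OF jh(1) g(1)] this]
  obtain z where z: "z \<in> hom C (Dom C j) (Dom C j')" "j' \<cdot> z = g \<cdot> j" .
  have "h \<cdot> j = (\<phi> \<cdot> j') \<cdot> z"
    using comp_reassoc[OF \<phi>(2) jh(1) g(1) \<phi>(1)] z(2)
      comp_assoc_hom[OF z(1) kernel_homs(1)[OF j' comparison_P(1)] \<phi>(1)]
    by simp
  then show ?thesis
    using factor_kills_kernel_comparison_P[OF \<phi> j'] comp_zero_arr_left_hom[OF z(1) objs(1)] by simp
qed

context
  fixes p assumes p: "p \<in> hom C L A" "p \<cdot> comparison = h"
begin

lemma factor_comparison_inj:
  assumes "i \<in> hom C Z S"
  shows "p \<cdot> (comparison \<cdot> i) = h \<cdot> i"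
  using comp_reassoc[OF p(2) assms comparison_hom p(1)] .

lemma factor_emb_x: "p \<cdot> emb_x = mx"
proof -
  have "(p \<cdot> emb_x) \<cdot> ex = mx \<cdot> ex"
    using comp_assoc_hom[OF image_x(3) emb_x(1) p(1)] emb_x_image
      factor_comparison_inj[OF injections(2)]
      h(3) image_x(5) by simp
  then show ?thesis
    using epiD[OF regular_epi_epi[OF image_x(1)]] comp_hom[OF emb_x(1) p(1)] image_x(3,4)
    by (simp add: hom_iff)
qed

lemma factor_emb_y: "p \<cdot> emb_y = my"
proof -
  have "(p \<cdot> emb_y) \<cdot> ey = my \<cdot> ey"
    using comp_assoc_hom[OF image_y(3) emb_y(1) p(1)] emb_y_image
      factor_comparison_inj[OF injections(3)]
      h(4) image_y(5) by simp
  then show ?thesis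
    using epiD[OF regular_epi_epi[OF image_y(1)]] comp_hom[OF emb_y(1) p(1)] image_y(3,4)
    by (simp add: hom_iff)
qed

text \<open>Both sides agree on the diagonal, and on the kernel of the second projection, which is covered
  by \<open>X'\<close>.\<close>
lemma factor_dX: "p \<cdot> dX = pi1"
proof -
  obtain j where j: "is_kernel C j pi2" using kernel_exists[OF kernel_pair_x(2)] .
  note jh = kernel_homs[OF j kernel_pair_x(2)]
  obtain t where t: "t \<in> hom C (Dom C j) X'" "dX \<cdot> j = emb_x \<cdot> t"
    using kernel_pi2_factors_emb_x[OF j] .
  show ?thesis
  proof (rule split_ext_jointly_epi[OF j kernel_pair_x(2) jh(1) diag_x(1,3) comp_hom[OF dX(1) p(1)]
        kernel_pair_x(1)])
    show "(p \<cdot> dX) \<cdot> j = pi1 \<cdot> j"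
      using comp_assoc_hom[OF jh(1) dX(1) p(1)] t(2)
        comp_reassoc[OF factor_emb_x t(1) emb_x(1) p(1)]
        comp_reassoc[OF emb_x(2) t(1) emb_x(1) zigzag(1)]
        comp_reassoc[OF dX(2) jh(1) dX(1) zigzag(1)]
      by simp
    show "(p \<cdot> dX) \<cdot> diag_x = pi1 \<cdot> diag_x"
      using comp_assoc_hom[OF diag_x(1) dX(1) p(1)] factor_comparison_inj[OF injections(1)] h(2)
        comparison_inj1 diag_x(2) by simp
  qed
qed

lemma factor_dY: "p \<cdot> dY = rho2"
proof -
  obtain j where j: "is_kernel C j rho1" using kernel_exists[OF kernel_pair_y(1)] .
  note jh = kernel_homs[OF j kernel_pair_y(1)]
  obtain t where t: "t \<in> hom C (Dom C j) Y'" "dY \<cdot> j = emb_y \<cdot> t"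
    using kernel_rho1_factors_emb_y[OF j] .
  show ?thesis
  proof (rule split_ext_jointly_epi[OF j kernel_pair_y(1) jh(1) diag_y(1,2) comp_hom[OF dY(1) p(1)]
        kernel_pair_y(2)])
    show "(p \<cdot> dY) \<cdot> j = rho2 \<cdot> j"
      using comp_assoc_hom[OF jh(1) dY(1) p(1)] t(2)
        comp_reassoc[OF factor_emb_y t(1) emb_y(1) p(1)]
        comp_reassoc[OF emb_y(4) t(1) emb_y(1) zigzag(3)]
        comp_reassoc[OF dY(4) jh(1) dY(1) zigzag(3)]
      by simp
    show "(p \<cdot> dY) \<cdot> diag_y = rho2 \<cdot> diag_y"
      using comp_assoc_hom[OF diag_y(1) dY(1) p(1)] factor_comparison_inj[OF injections(1)] h(2)
        comparison_inj1' diag_y(3) by simp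
  qed
qed

lemma factor_is_pregroupoid: "is_pregroupoid p"
  unfolding is_pregroupoid_def using p(1) factor_dX factor_dY by blast

end

lemma commutator_zero_imp_pregroupoid:
  assumes "h \<cdot> k = zero_arr K A"
  shows "\<exists>p. is_pregroupoid p"
proof -
  obtain j where j: "is_kernel C j comparison" using kernel_exists[OF comparison_hom] .
  obtain p where "p \<in> hom C L A" "p \<cdot> comparison = h"
    using full_image_cokernel_desc[OF comparison_hom comparison_full_image j
        kernel_homs(1)[OF j comparison_hom] h(1)
        commutator_zero_kills_kernel_comparison[OF assms j]] .
  then show ?thesis using factor_is_pregroupoid by blast
qed

end

theorem corollary2p6:
  fixes C :: "('o,'a) cat"
    and X Y A QX QY L KX KY S SX SY P :: 'o
    and x y qx qy l1 l2 l3 pi1 pi2 rho1 rho2 dX dY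
        i1 i2 i3 a1 a2 b1 b2 rX rY q1 q2 fX fY g k h e m :: 'a
  assumes hom: "homological C" and fcc: "finitely_cocomplete C"
    and x: "x \<in> hom C X A" and y: "y \<in> hom C Y A"
    and imx: "\<exists>ex mx. image_fact C x ex mx \<and> normal_mono C mx"
    and imy: "\<exists>ey my. image_fact C y ey my \<and> normal_mono C my"
    \<comment> \<open>cokernels A \<rightarrow> A/X, A \<rightarrow> A/Y\<close>
    and qx: "is_cokernel C qx x" and QX: "Cod C qx = QX"
    and qy: "is_cokernel C qy y" and QY: "Cod C qy = QY"
    \<comment> \<open>A_3 and the kernel pairs\<close>
    and A3: "is_zigzag_limit C qx qy L l1 l2 l3"
    and KPX: "is_pullback C qx qx KX pi1 pi2"
    and KPY: "is_pullback C qy qy KY rho1 rho2"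
    and dX: "dX \<in> hom C KX L" "Comp C l1 dX = pi1" "Comp C l2 dX = pi2" "Comp C l3 dX = pi2"
    and dY: "dY \<in> hom C KY L" "Comp C l1 dY = rho1" "Comp C l2 dY = rho1" "Comp C l3 dY = rho2"
    \<comment> \<open>data for the 1-weighted commutator\<close>
    and S: "is_coproduct3 C A X Y S i1 i2 i3"
    and SX: "is_coproduct2 C A X SX a1 a2"
    and SY: "is_coproduct2 C A Y SY b1 b2"
    and rX: "rX \<in> hom C SX A" "Comp C rX a1 = Id C A" "zero_mor C (Comp C rX a2)"
    and rY: "rY \<in> hom C SY A" "Comp C rY b1 = Id C A" "zero_mor C (Comp C rY b2)"
    and PB: "is_pullback C rX rY P q1 q2"
    and fX: "fX \<in> hom C S SX" "Comp C fX i1 = a1" "Comp C fX i2 = a2" "zero_mor C (Comp C fX i3)"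
    and fY: "fY \<in> hom C S SY" "Comp C fY i1 = b1" "zero_mor C (Comp C fY i2)" "Comp C fY i3 = b2"
    and g: "g \<in> hom C S P" "Comp C q1 g = fX" "Comp C q2 g = fY"
    and k: "is_kernel C k g"
    and h: "h \<in> hom C S A" "Comp C h i1 = Id C A" "Comp C h i2 = x" "Comp C h i3 = y"
    and im: "image_fact C (Comp C h k) e m"
  shows "((\<exists>p. p \<in> hom C L A \<and> Comp C p dX = pi1 \<and> Comp C p dY = rho2)
           \<longleftrightarrow> (\<exists>!p. p \<in> hom C L A \<and> Comp C p dX = pi1 \<and> Comp C p dY = rho2))
       \<and> ((\<exists>!p. p \<in> hom C L A \<and> Comp C p dX = pi1 \<and> Comp C p dY = rho2)
           \<longleftrightarrow> zero_obj C (Dom C m))"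
proof -
  obtain ex mx ey my where imx': "image_fact C x ex mx" "normal_mono C mx"
    and imy': "image_fact C y ey my" "normal_mono C my"
    using imx imy by blast
  interpret commutator_setting C X Y A QX QY L KX KY S SX SY P x y ex mx ey my qx qy l1 l2 l3 pi1
    pi2 rho1 rho2 dX dY i1 i2 i3 a1 a2 b1 b2 rX rY q1 q2 fX fY g k h
    using hom x y imx' imy' qx QX qy QY A3 KPX KPY dX dY S SX SY rX rY PB fX fY g k h
    by unfold_locales
  have existence: "(\<exists>p. is_pregroupoid p) \<longleftrightarrow> h \<cdot> k = zero_arr K A"
    using pregroupoid_imp_commutator_zero commutator_zero_imp_pregroupoid by blast
  have uniqueness: "(\<exists>p. is_pregroupoid p) \<longleftrightarrow> (\<exists>!p. is_pregroupoid p)"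
    using pregroupoid_unique by blast
  have "zero_obj C (Dom C m) \<longleftrightarrow> h \<cdot> k = zero_arr K A"
    using image_fact_zero_obj_iff[OF im comp_hom[OF k_hom h(1)]] .
  then show ?thesis
    using existence uniqueness unfolding is_pregroupoid_def by blast
qed

end
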